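(* Let $A$ be an associative ring, not necessarily commutative and not necessarily unital, and let $n\ge 2$. Then the assignment $y_i^a\mapsto x_{i\,i+1}^a\,y_i$ ($1\le i\le n-1$, $a\in A$) induces a well-defined map $$\phi: Br_n(A)\longrightarrow St_n(A)\rtimes Br_n,$$ and $\phi$ is an isomorphism of groups.
   Context: The parametrized braid group $Br_n(A)$ is the group generated by elements $y_i^a$, $1\le i\le n-1$, $a\in A$, subject to the relations, for all $a,b,c\in A$: (A1) $y_i^a y_i^0 y_i^b = y_i^0 y_i^0 y_i^{a+b}$; (A1$\times$A1) $y_i^a y_j^b = y_j^b y_i^a$ if $|i-j|\ge 2$; (A2) $y_i^a y_{i+1}^b y_i^c = y_{i+1}^c\, y_i^{b+ac}\, y_{i+1}^a$. $Br_n$ denotes the Artin braid group, with generators $y_1,\dots,y_{n-1}$ and relations $y_iy_j=y_jy_i$ for $|i-j|\ge2$ and $y_iy_{i+1}y_i=y_{i+1}y_iy_{i+1}$; it maps onto the symmetric group $\mathcal S_n$ via $y_i\mapsto$ the transposition $(i\ i+1)$. The Steinberg group $St_n(A)$ is generated by $x_{ij}^a$, $1\le i,j\le n$, $i\ne j$, $a\in A$, subject to: $x_{ij}^a x_{ij}^b = x_{ij}^{a+b}$; $x_{ij}^a x_{kl}^b = x_{kl}^b x_{ij}^a$ for $i\ne l$, $j\ne k$; $x_{ij}^a x_{jk}^b = x_{jk}^b x_{ik}^{ab} x_{ij}^a$ for $i\ne k$. The braid group $Br_n$ acts on $St_n(A)$ through $\mathcal S_n$ by $\sigma\cdot x_{ij}^a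 = x_{\sigma(i)\sigma(j)}^a$, and $St_n(A)\rtimes Br_n$ is the semidirect product for this action. *)

theory Defs
  imports "HOL-Algebra.Group" "HOL-Combinatorics.Transposition"
begin

text \<open>A letter is a pair (g, b): b = True means the generator g, b = False its formal
inverse.\<close>

type_synonym 'g word = "('g \<times> bool) list"

inductive_set pres_eq :: "'g set \<Rightarrow> ('g word \<times> 'g word) set \<Rightarrow> ('g word \<times> 'g word) set"
  for S :: "'g set" and R :: "('g word \<times> 'g word) set" where
  refl: "w \<in> lists (S \<times> UNIV) \<Longrightarrow> (w, w) \<in> pres_eq S R"
| sym: "(u, v) \<in> pres_eq S R \<Longrightarrow> (v, u) \<in> pres_eq S R"
| trans: "(u, v) \<in> pres_eq S R \<Longrightarrow> (v, w) \<in> pres_eq S R \<Longrightarrow> (u, w) \<in> pres_eq S R"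
| rel: "(u, v) \<in> R \<Longrightarrow> u \<in> lists (S \<times> UNIV) \<Longrightarrow> v \<in> lists (S \<times> UNIV) \<Longrightarrow> (u, v) \<in> pres_eq S R"
| cancel: "g \<in> S \<Longrightarrow> ([(g, b), (g, \<not> b)], []) \<in> pres_eq S R"
| cong: "(u, v) \<in> pres_eq S R \<Longrightarrow> w \<in> lists (S \<times> UNIV) \<Longrightarrow> z \<in> lists (S \<times> UNIV) \<Longrightarrow>
         (w @ u @ z, w @ v @ z) \<in> pres_eq S R"

definition word_class :: "'g set \<Rightarrow> ('g word \<times> 'g word) set \<Rightarrow> 'g word \<Rightarrow> 'g word set" where
  "word_class S R w = pres_eq S R `` {w}"

definition rep :: "'g word set \<Rightarrow> 'g word" where
  "rep X = (SOME w. w \<in> X)"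

definition presented_group :: "'g set \<Rightarrow> ('g word \<times> 'g word) set \<Rightarrow> 'g word set monoid" where
  "presented_group S R =
     \<lparr> carrier = lists (S \<times> UNIV) // pres_eq S R,
       monoid.mult = (\<lambda>X Y. word_class S R (rep X @ rep Y)),
       one = word_class S R [] \<rparr>"

fun word_eval :: "('b, 'c) monoid_scheme \<Rightarrow> ('g \<Rightarrow> 'b) \<Rightarrow> 'g word \<Rightarrow> 'b" where
  "word_eval G f [] = \<one>\<^bsub>G\<^esub>"
| "word_eval G f ((g, b) # w) =
     (if b then f g else inv\<^bsub>G\<^esub> (f g)) \<otimes>\<^bsub>G\<^esub> word_eval G f w"

text \<open>Generator (i, a) stands for \<open>y_i^a\<close>.\<close>
definition brA_gens :: "nat \<Rightarrow> (nat \<times> 'a) set" where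
  "brA_gens n = {(i, a). 1 \<le> i \<and> i \<le> n - 1}"

definition brA_rels :: "nat \<Rightarrow> ((nat \<times> 'a::ring) word \<times> (nat \<times> 'a) word) set" where
  "brA_rels n =
     {([((i, a), True), ((i, 0), True), ((i, b), True)],
       [((i, 0), True), ((i, 0), True), ((i, a + b), True)]) | i a b. 1 \<le> i \<and> i \<le> n - 1}
   \<union> {([((i, a), True), ((j, b), True)], [((j, b), True), ((i, a), True)]) | i j a b.
        1 \<le> i \<and> i \<le> n - 1 \<and> 1 \<le> j \<and> j \<le> n - 1 \<and> (i + 2 \<le> j \<or> j + 2 \<le> i)}
   \<union> {([((i, a), True), ((i + 1, b), True), ((i, c), True)],
        [((i + 1, c), True), ((i, b + a * c), True), ((i + 1, a), True)]) | i a b c.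
        1 \<le> i \<and> i + 1 \<le> n - 1}"

definition BrA :: "nat \<Rightarrow> (nat \<times> 'a::ring) word set monoid" where
  "BrA n = presented_group (brA_gens n) (brA_rels n)"

text \<open>Generator i stands for \<open>y_i\<close>.\<close>
definition br_gens :: "nat \<Rightarrow> nat set" where
  "br_gens n = {i. 1 \<le> i \<and> i \<le> n - 1}"

definition br_rels :: "nat \<Rightarrow> (nat word \<times> nat word) set" where
  "br_rels n =
     {([(i, True), (j, True)], [(j, True), (i, True)]) | i j.
        1 \<le> i \<and> i \<le> n - 1 \<and> 1 \<le> j \<and> j \<le> n - 1 \<and> (i + 2 \<le> j \<or> j + 2 \<le> i)}
   \<union> {([(i, True), (i + 1, True), (i, True)], [(i + 1, True), (i, True), (i + 1, True)]) | i.
        1 \<le> i \<and> i + 1 \<le> n - 1}"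

definition Br :: "nat \<Rightarrow> nat word set monoid" where
  "Br n = presented_group (br_gens n) (br_rels n)"

text \<open>The permutation of \<open>{1..n}\<close> attached to a braid word, via \<open>y_i \<mapsto> (i i+1)\<close>
  (product read as composition of maps, so it is a homomorphism for left actions).\<close>
fun perm_of_word :: "nat word \<Rightarrow> nat \<Rightarrow> nat" where
  "perm_of_word [] = id"
| "perm_of_word ((i, b) # w) = Transposition.transpose i (i + 1) \<circ> perm_of_word w"

definition perm_of_braid :: "nat word set \<Rightarrow> nat \<Rightarrow> nat" where
  "perm_of_braid B = perm_of_word (rep B)"

text \<open>Generator (i, j, a) stands for \<open>x_{ij}^a\<close>.\<close>
definition st_gens :: "nat \<Rightarrow> (nat \<times> nat \<times> 'a) set" where
  "st_gens n = {(i, j, a). 1 \<le> i \<and> i \<le> n \<and> 1 \<le> j \<and> j \<le> n \<and> i \<noteq> j}"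

definition st_rels :: "nat \<Rightarrow> ((nat \<times> nat \<times> 'a::ring) word \<times> (nat \<times> nat \<times> 'a) word) set" where
  "st_rels n =
     {([((i, j, a), True), ((i, j, b), True)], [((i, j, a + b), True)]) | i j a b.
        (i, j, a) \<in> st_gens n}
   \<union> {([((i, j, a), True), ((k, l, b), True)], [((k, l, b), True), ((i, j, a), True)]) | i j k l a b.
        (i, j, a) \<in> st_gens n \<and> (k, l, b) \<in> st_gens n \<and> i \<noteq> l \<and> j \<noteq> k}
   \<union> {([((i, j, a), True), ((j, k, b), True)],
        [((j, k, b), True), ((i, k, a * b), True), ((i, j, a), True)]) | i j k a b.
        (i, j, a) \<in> st_gens n \<and> (j, k, b) \<in> st_gens n \<and> i \<noteq> k}"

definition St :: "nat \<Rightarrow> (nat \<times> nat \<times> 'a::ring) word set monoid" where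
  "St n = presented_group (st_gens n) (st_rels n)"

definition st_act :: "nat \<Rightarrow> (nat \<Rightarrow> nat) \<Rightarrow> (nat \<times> nat \<times> 'a::ring) word set \<Rightarrow> (nat \<times> nat \<times> 'a) word set" where
  "st_act n \<sigma> X = word_class (st_gens n) (st_rels n)
      (map (\<lambda>((i, j, a), b). ((\<sigma> i, \<sigma> j, a), b)) (rep X))"

definition StBr :: "nat \<Rightarrow> ((nat \<times> nat \<times> 'a::ring) word set \<times> nat word set) monoid" where
  "StBr n =
     \<lparr> carrier = carrier (St n) \<times> carrier (Br n),
       monoid.mult = (\<lambda>(s, b) (s', b').
          (s \<otimes>\<^bsub>St n\<^esub> st_act n (perm_of_braid b) s', b \<otimes>\<^bsub>Br n\<^esub> b')),
       one = (\<one>\<^bsub>St n\<^esub>, \<one>\<^bsub>Br n\<^esub>) \<rparr>"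

definition phi_gen :: "nat \<Rightarrow> nat \<times> 'a::ring \<Rightarrow> (nat \<times> nat \<times> 'a) word set \<times> nat word set" where
  "phi_gen n = (\<lambda>(i, a).
     (word_class (st_gens n) (st_rels n) [((i, i + 1, a), True)], \<one>\<^bsub>Br n\<^esub>)
     \<otimes>\<^bsub>StBr n\<^esub> (\<one>\<^bsub>St n\<^esub>, word_class (br_gens n) (br_rels n) [(i, True)]))"

definition phi :: "nat \<Rightarrow> (nat \<times> 'a::ring) word set \<Rightarrow> (nat \<times> nat \<times> 'a) word set \<times> nat word set" where
  "phi n X = word_eval (StBr n) (phi_gen n) (rep X)"

end

(* The map phi is well defined because the images of the generators satisfy (A1), (A1xA1)
   and (A2) in St_n(A) x| Br_n, a direct computation with the Steinberg relations.

   For the inverse, take any group with elements y_i^a satisfying these relations, and put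
   t_i = y_i^0 and X_i^a = y_i^a t_i^-1.  The relations say that the t_i satisfy the braid
   relations and that conjugation by t_k moves X_i^a as the transposition (k k+1) moves the
   pair (i, i+1).  Conjugating the X_i^a by products of t's therefore gives well-defined
   elements x_ij^a for all i /= j, on which conjugation by a braid word acts through its
   permutation.  Every Steinberg relation involves at most four indices, so a suitable braid
   word carries it to indices among 1..4, where it follows from (A1), (A1xA1) and (A2).
   Hence the x_ij^a and t_i define a homomorphism psi from St_n(A) x| Br_n, and psi and phi
   are mutually inverse on generators. *)

theory Submission
  imports Defs "HOL-Combinatorics.Permutations"
begin

section \<open>Groups given by generators and relations\<close>

lemma pres_eq_in_lists:
  "(u, v) \<in> pres_eq S R \<Longrightarrow> u \<in> lists (S \<times> UNIV) \<and> v \<in> lists (S \<times> UNIV)"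
  by (induction rule: pres_eq.induct) auto

definition word_inv :: "'g word \<Rightarrow> 'g word" where
  "word_inv w = rev (map (\<lambda>(g, b). (g, \<not> b)) w)"

lemma word_inv_Nil [simp]: "word_inv [] = []"
  by (simp add: word_inv_def)

lemma word_inv_Cons [simp]: "word_inv ((g, b) # w) = word_inv w @ [(g, \<not> b)]"
  by (simp add: word_inv_def)

lemma word_inv_in_lists: "w \<in> lists (S \<times> UNIV) \<Longrightarrow> word_inv w \<in> lists (S \<times> UNIV)"
  by (induction w) (auto simp: word_inv_def)

lemma word_inv_word_inv [simp]: "word_inv (word_inv w) = w"
  by (induction w) (auto simp: word_inv_def rev_map comp_def)

lemma pres_eq_append:
  assumes "(u, u') \<in> pres_eq S R" "(v, v') \<in> pres_eq S R"
  shows "(u @ v, u' @ v') \<in> pres_eq S R"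
proof -
  from assms have l: "u \<in> lists (S \<times> UNIV)" "u' \<in> lists (S \<times> UNIV)"
    "v \<in> lists (S \<times> UNIV)" "v' \<in> lists (S \<times> UNIV)"
    using pres_eq_in_lists by blast+
  have "([] @ u @ v, [] @ u' @ v) \<in> pres_eq S R"
    by (rule pres_eq.cong[OF assms(1)]) (use l in auto)
  moreover have "(u' @ v @ [], u' @ v' @ []) \<in> pres_eq S R"
    by (rule pres_eq.cong[OF assms(2)]) (use l in auto)
  ultimately show ?thesis by (auto intro: pres_eq.trans)
qed

lemma pres_eq_append_word_inv:
  "w \<in> lists (S \<times> UNIV) \<Longrightarrow> (w @ word_inv w, []) \<in> pres_eq S R"
proof (induction w)
  case Nil
  then show ?case by (auto intro: pres_eq.refl)
next
  case (Cons x w)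
  obtain g b where x: "x = (g, b)" by force
  have g: "g \<in> S" and w: "w \<in> lists (S \<times> UNIV)" using Cons.prems x by auto
  have "([(g, b)] @ (w @ word_inv w) @ [(g, \<not> b)], [(g, b)] @ [] @ [(g, \<not> b)]) \<in> pres_eq S R"
    by (rule pres_eq.cong[OF Cons.IH[OF w]]) (use g in auto)
  moreover have "([(g, b), (g, \<not> b)], []) \<in> pres_eq S R"
    by (rule pres_eq.cancel[OF g])
  ultimately show ?case using x by (auto intro: pres_eq.trans)
qed

lemma pres_eq_word_inv_append:
  "w \<in> lists (S \<times> UNIV) \<Longrightarrow> (word_inv w @ w, []) \<in> pres_eq S R"
  using pres_eq_append_word_inv[of "word_inv w" S R] word_inv_in_lists[of w S] by simp

lemma equiv_pres_eq: "equiv (lists (S \<times> UNIV)) (pres_eq S R)"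
proof (rule equivI)
  show "refl_on (lists (S \<times> UNIV)) (pres_eq S R)"
    unfolding refl_on_def using pres_eq_in_lists pres_eq.refl by fast
  show "sym (pres_eq S R)" unfolding sym_def using pres_eq.sym by blast
  show "trans (pres_eq S R)" unfolding trans_def using pres_eq.trans by blast
  show "pres_eq S R \<subseteq> lists (S \<times> UNIV) \<times> lists (S \<times> UNIV)" using pres_eq_in_lists by fast
qed

lemma word_class_eqI:
  "(u, v) \<in> pres_eq S R \<Longrightarrow> word_class S R u = word_class S R v"
  unfolding word_class_def using equiv_class_eq[OF equiv_pres_eq] .

lemma pres_eq_rep_word_class:
  assumes "w \<in> lists (S \<times> UNIV)"
  shows "(w, rep (word_class S R w)) \<in> pres_eq S R"
proof -
  have "w \<in> word_class S R w"
    using assms unfolding word_class_def by (auto intro: pres_eq.refl)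
  then have "rep (word_class S R w) \<in> word_class S R w"
    unfolding rep_def by (rule someI)
  then show ?thesis unfolding word_class_def by auto
qed

lemma carrier_presented_group: "carrier (presented_group S R) = lists (S \<times> UNIV) // pres_eq S R"
  by (simp add: presented_group_def)

lemma carrier_presented_groupE:
  assumes "X \<in> carrier (presented_group S R)"
  obtains w where "w \<in> lists (S \<times> UNIV)" "X = word_class S R w"
  using assms unfolding carrier_presented_group word_class_def quotient_def by blast

lemma word_class_in_carrier:
  "w \<in> lists (S \<times> UNIV) \<Longrightarrow> word_class S R w \<in> carrier (presented_group S R)"
  unfolding carrier_presented_group word_class_def by (auto intro: quotientI)

lemma mult_word_class:
  "u \<in> lists (S \<times> UNIV) \<Longrightarrow> v \<in> lists (S \<times> UNIV) \<Longrightarrow>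
   word_class S R u \<otimes>\<^bsub>presented_group S R\<^esub> word_class S R v = word_class S R (u @ v)"
  unfolding presented_group_def
  by (simp, rule word_class_eqI, rule pres_eq.sym, rule pres_eq_append; rule pres_eq_rep_word_class)

lemma one_presented_group: "\<one>\<^bsub>presented_group S R\<^esub> = word_class S R []"
  by (simp add: presented_group_def)

lemma group_presented_group: "group (presented_group S R)"
proof (rule groupI)
  fix x y assume "x \<in> carrier (presented_group S R)" "y \<in> carrier (presented_group S R)"
  then obtain u v where "u \<in> lists (S \<times> UNIV)" "v \<in> lists (S \<times> UNIV)"
    "x = word_class S R u" "y = word_class S R v" by (metis carrier_presented_groupE)
  then show "x \<otimes>\<^bsub>presented_group S R\<^esub> y \<in> carrier (presented_group S R)"
    by (simp add: mult_word_class word_class_in_carrier)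
next
  show "\<one>\<^bsub>presented_group S R\<^esub> \<in> carrier (presented_group S R)"
    by (simp add: one_presented_group word_class_in_carrier)
next
  fix x y z assume "x \<in> carrier (presented_group S R)" "y \<in> carrier (presented_group S R)"
    "z \<in> carrier (presented_group S R)"
  then obtain u v w where "u \<in> lists (S \<times> UNIV)" "v \<in> lists (S \<times> UNIV)" "w \<in> lists (S \<times> UNIV)"
    "x = word_class S R u" "y = word_class S R v" "z = word_class S R w"
    by (metis carrier_presented_groupE)
  then show "x \<otimes>\<^bsub>presented_group S R\<^esub> y \<otimes>\<^bsub>presented_group S R\<^esub> z =
    x \<otimes>\<^bsub>presented_group S R\<^esub> (y \<otimes>\<^bsub>presented_group S R\<^esub> z)"
    by (simp add: mult_word_class)
next
  fix x assume "x \<in> carrier (presented_group S R)"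
  then obtain u where "u \<in> lists (S \<times> UNIV)" "x = word_class S R u"
    by (metis carrier_presented_groupE)
  then show "\<one>\<^bsub>presented_group S R\<^esub> \<otimes>\<^bsub>presented_group S R\<^esub> x = x"
    by (simp add: one_presented_group mult_word_class)
next
  fix x assume "x \<in> carrier (presented_group S R)"
  then obtain u where u: "u \<in> lists (S \<times> UNIV)" "x = word_class S R u"
    by (metis carrier_presented_groupE)
  show "\<exists>y\<in>carrier (presented_group S R). y \<otimes>\<^bsub>presented_group S R\<^esub> x = \<one>\<^bsub>presented_group S R\<^esub>"
  proof
    show "word_class S R (word_inv u) \<otimes>\<^bsub>presented_group S R\<^esub> x = \<one>\<^bsub>presented_group S R\<^esub>"
      using u word_inv_in_lists[OF u(1)] pres_eq_word_inv_append[OF u(1)]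
      by (simp add: mult_word_class one_presented_group word_class_eqI)
    show "word_class S R (word_inv u) \<in> carrier (presented_group S R)"
      using word_inv_in_lists[OF u(1)] by (rule word_class_in_carrier)
  qed
qed

definition pres_gen :: "'g set \<Rightarrow> ('g word \<times> 'g word) set \<Rightarrow> 'g \<Rightarrow> 'g word set" where
  "pres_gen S R g = word_class S R [(g, True)]"

lemma pres_gen_in_carrier: "g \<in> S \<Longrightarrow> pres_gen S R g \<in> carrier (presented_group S R)"
  unfolding pres_gen_def by (rule word_class_in_carrier) simp

lemma inv_pres_gen:
  assumes "g \<in> S"
  shows "inv\<^bsub>presented_group S R\<^esub> pres_gen S R g = word_class S R [(g, False)]"
proof -
  interpret group "presented_group S R" by (rule group_presented_group)
  have "word_class S R [(g, False)] \<otimes>\<^bsub>presented_group S R\<^esub> pres_gen S R g = \<one>\<^bsub>presented_group S R\<^esub>"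
    unfolding pres_gen_def one_presented_group using assms
    by (subst mult_word_class) (auto intro!: word_class_eqI pres_eq.cancel[of g S False R, simplified])
  then show ?thesis
    using assms by (intro inv_equality) (auto simp: pres_gen_in_carrier word_class_in_carrier)
qed

lemma word_eval_closed:
  "group K \<Longrightarrow> f ` S \<subseteq> carrier K \<Longrightarrow> w \<in> lists (S \<times> UNIV) \<Longrightarrow> word_eval K f w \<in> carrier K"
  by (induction w) (auto simp: group.inv_closed monoid.m_closed group.is_monoid)

lemma word_eval_append:
  assumes "group K" "f ` S \<subseteq> carrier K" "u \<in> lists (S \<times> UNIV)" "v \<in> lists (S \<times> UNIV)"
  shows "word_eval K f (u @ v) = word_eval K f u \<otimes>\<^bsub>K\<^esub> word_eval K f v"
  using assms(3)
proof (induction u)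
  case Nil
  then show ?case using word_eval_closed[OF assms(1,2,4)] assms(1) by (simp add: group.is_monoid)
next
  case (Cons x u)
  then obtain g b where x: "x = (g, b)" "g \<in> S" by auto
  have "f g \<in> carrier K" "inv\<^bsub>K\<^esub> f g \<in> carrier K" using assms x by (auto simp: group.inv_closed)
  then show ?case using Cons word_eval_closed[OF assms(1,2)] assms(4) x
    by (auto simp: monoid.m_assoc group.is_monoid[OF assms(1)])
qed

lemma word_eval_cong:
  "(\<And>g. g \<in> S \<Longrightarrow> f g = f' g) \<Longrightarrow> w \<in> lists (S \<times> UNIV) \<Longrightarrow> word_eval K f w = word_eval K f' w"
  by (induction w) auto

lemma hom_word_eval:
  assumes "group K" "group L" "h \<in> hom K L" "f ` S \<subseteq> carrier K" "w \<in> lists (S \<times> UNIV)"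
  shows "h (word_eval K f w) = word_eval L (h \<circ> f) w"
  using assms(5)
proof (induction w)
  case Nil
  then show ?case using assms by (simp add: group_hom.hom_one group_hom.intro group_hom_axioms.intro)
next
  case (Cons x w)
  then obtain g b where x: "x = (g, b)" "g \<in> S" by auto
  interpret group_hom K L h using assms by (simp add: group_hom.intro group_hom_axioms.intro)
  have "f g \<in> carrier K" using assms x by auto
  then show ?case using Cons x word_eval_closed[OF assms(1,4)] by (auto simp: hom_mult hom_inv)
qed

lemma word_eval_pres_gen:
  "w \<in> lists (S \<times> UNIV) \<Longrightarrow> word_eval (presented_group S R) (pres_gen S R) w = word_class S R w"
proof (induction w)
  case Nil
  then show ?case by (simp add: one_presented_group)
next
  case (Cons x w)
  then obtain g b where "x = (g, b)" "g \<in> S" by auto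
  then show ?case using Cons
    by (auto simp: inv_pres_gen[unfolded pres_gen_def] pres_gen_def mult_word_class)
qed

lemma word_eval_pres_gen_relation:
  assumes "(u, v) \<in> R" "u \<in> lists (S \<times> UNIV)" "v \<in> lists (S \<times> UNIV)"
  shows "word_eval (presented_group S R) (pres_gen S R) u = word_eval (presented_group S R) (pres_gen S R) v"
  using word_class_eqI[OF pres_eq.rel[OF assms]] by (simp add: word_eval_pres_gen assms(2,3))

definition relations_hold ::
    "('b, 'c) monoid_scheme \<Rightarrow> ('g \<Rightarrow> 'b) \<Rightarrow> 'g set \<Rightarrow> ('g word \<times> 'g word) set \<Rightarrow> bool" where
  "relations_hold K f S R \<longleftrightarrow> (\<forall>(u, v) \<in> R. u \<in> lists (S \<times> UNIV) \<longrightarrow> v \<in> lists (S \<times> UNIV) \<longrightarrow>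
      word_eval K f u = word_eval K f v)"

lemma word_eval_pres_eq:
  assumes "(u, v) \<in> pres_eq S R" "group K" "f ` S \<subseteq> carrier K" "relations_hold K f S R"
  shows "word_eval K f u = word_eval K f v"
  using assms(1)
proof (induction rule: pres_eq.induct)
  case (rel u v)
  then show ?case using assms(4) unfolding relations_hold_def by blast
next
  case (cancel g b)
  have "f g \<in> carrier K" using assms cancel by auto
  then show ?case using assms(2)
    by (cases b) (auto simp: group.l_inv group.r_inv group.inv_closed group.is_monoid monoid.r_one)
next
  case (cong u v w z)
  have "u \<in> lists (S \<times> UNIV)" "v \<in> lists (S \<times> UNIV)" using cong pres_eq_in_lists by blast+
  then show ?case using cong word_eval_append[OF assms(2,3)] by simp
qed auto

definition pres_lift :: "('b, 'c) monoid_scheme \<Rightarrow> ('g \<Rightarrow> 'b) \<Rightarrow> 'g word set \<Rightarrow> 'b" where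
  "pres_lift K f X = word_eval K f (rep X)"

lemma pres_lift_word_class:
  assumes "group K" "f ` S \<subseteq> carrier K" "relations_hold K f S R" "w \<in> lists (S \<times> UNIV)"
  shows "pres_lift K f (word_class S R w) = word_eval K f w"
  unfolding pres_lift_def
  using word_eval_pres_eq[OF pres_eq.sym[OF pres_eq_rep_word_class[OF assms(4)]] assms(1-3)] .

lemma pres_lift_hom:
  assumes "group K" "f ` S \<subseteq> carrier K" "relations_hold K f S R"
  shows "pres_lift K f \<in> hom (presented_group S R) K"
proof (rule homI)
  fix x assume "x \<in> carrier (presented_group S R)"
  then obtain u where "u \<in> lists (S \<times> UNIV)" "x = word_class S R u"
    by (metis carrier_presented_groupE)
  then show "pres_lift K f x \<in> carrier K"
    using pres_lift_word_class[OF assms] word_eval_closed[OF assms(1,2)] by simp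
next
  fix x y assume "x \<in> carrier (presented_group S R)" "y \<in> carrier (presented_group S R)"
  then obtain u v where "u \<in> lists (S \<times> UNIV)" "v \<in> lists (S \<times> UNIV)"
    "x = word_class S R u" "y = word_class S R v" by (metis carrier_presented_groupE)
  then show "pres_lift K f (x \<otimes>\<^bsub>presented_group S R\<^esub> y) = pres_lift K f x \<otimes>\<^bsub>K\<^esub> pres_lift K f y"
    using pres_lift_word_class[OF assms] word_eval_append[OF assms(1,2)] by (simp add: mult_word_class)
qed

section \<open>The permutation of a braid\<close>

abbreviation adj_swap :: "nat \<Rightarrow> nat \<Rightarrow> nat" where
  "adj_swap i \<equiv> Transposition.transpose i (i + 1)"

lemma adj_swap_permutes: "1 \<le> i \<Longrightarrow> i \<le> n - 1 \<Longrightarrow> adj_swap i permutes {1..n}"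
  by (rule permutes_swap_id) auto

lemma adj_swap_comm: "i + 2 \<le> j \<or> j + 2 \<le> i \<Longrightarrow> adj_swap i \<circ> adj_swap j = adj_swap j \<circ> adj_swap i"
  by (rule ext) (auto simp: Transposition.transpose_def)

lemma adj_swap_braid:
  "adj_swap i \<circ> (adj_swap (i + 1) \<circ> adj_swap i) = adj_swap (i + 1) \<circ> (adj_swap i \<circ> adj_swap (i + 1))"
  by (rule ext) (auto simp: Transposition.transpose_def)

lemma perm_of_word_append: "perm_of_word (u @ v) = perm_of_word u \<circ> perm_of_word v"
proof (induction u)
  case (Cons x u)
  then show ?case by (cases x) auto
qed simp

lemma perm_of_word_permutes: "w \<in> lists (br_gens n \<times> UNIV) \<Longrightarrow> perm_of_word w permutes {1..n}"
proof (induction w)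
  case (Cons x w)
  then obtain i b where x: "x = (i, b)" "1 \<le> i" "i \<le> n - 1" by (auto simp: br_gens_def)
  have "adj_swap i \<circ> perm_of_word w permutes {1..n}"
    using Cons x by (intro permutes_compose adj_swap_permutes) auto
  then show ?case using x by (simp add: comp_def)
qed simp

lemma permutes_interval_apply:
  "\<sigma> permutes {1..n} \<Longrightarrow> 1 \<le> i \<Longrightarrow> i \<le> n \<Longrightarrow> 1 \<le> \<sigma> i \<and> \<sigma> i \<le> n"
  using permutes_in_image[of \<sigma> "{1..n}" i] by simp

lemma perm_of_word_pres_eq:
  "(u, v) \<in> pres_eq (br_gens n) (br_rels n) \<Longrightarrow> perm_of_word u = perm_of_word v"
proof (induction rule: pres_eq.induct)
  case (rel u v)
  then consider (far) i j where "u = [(i, True), (j, True)]" "v = [(j, True), (i, True)]"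
      "i + 2 \<le> j \<or> j + 2 \<le> i"
    | (adj) i where "u = [(i, True), (i + 1, True), (i, True)]"
      "v = [(i + 1, True), (i, True), (i + 1, True)]"
    unfolding br_rels_def by blast
  then show ?case
  proof cases
    case far
    then show ?thesis using adj_swap_comm[of i j] by simp
  next
    case adj
    then show ?thesis using adj_swap_braid[of i] by simp
  qed
next
  case (cong u v w z)
  then show ?case by (simp add: perm_of_word_append)
qed auto

lemma Br_carrierE:
  assumes "b \<in> carrier (Br n)"
  obtains w where "w \<in> lists (br_gens n \<times> UNIV)" "b = word_class (br_gens n) (br_rels n) w"
  using assms unfolding Br_def by (rule carrier_presented_groupE)

lemma perm_of_braid_word_class:
  "w \<in> lists (br_gens n \<times> UNIV) \<Longrightarrow>
   perm_of_braid (word_class (br_gens n) (br_rels n) w) = perm_of_word w"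
  unfolding perm_of_braid_def using perm_of_word_pres_eq[OF pres_eq_rep_word_class] by simp

lemma perm_of_braid_permutes: "b \<in> carrier (Br n) \<Longrightarrow> perm_of_braid b permutes {1..n}"
  by (metis Br_carrierE perm_of_braid_word_class perm_of_word_permutes)

lemma perm_of_braid_mult:
  assumes "b \<in> carrier (Br n)" "b' \<in> carrier (Br n)"
  shows "perm_of_braid (b \<otimes>\<^bsub>Br n\<^esub> b') = perm_of_braid b \<circ> perm_of_braid b'"
proof -
  obtain u v where "u \<in> lists (br_gens n \<times> UNIV)" "b = word_class (br_gens n) (br_rels n) u"
    "v \<in> lists (br_gens n \<times> UNIV)" "b' = word_class (br_gens n) (br_rels n) v"
    using assms by (metis Br_carrierE)
  then show ?thesis
    by (simp add: Br_def mult_word_class perm_of_braid_word_class perm_of_word_append)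
qed

lemma perm_of_braid_one: "perm_of_braid \<one>\<^bsub>Br n\<^esub> = id"
  unfolding Br_def one_presented_group by (subst perm_of_braid_word_class) auto

fun shift_word :: "nat \<Rightarrow> nat \<Rightarrow> nat word" where
  "shift_word 0 k = []"
| "shift_word (Suc d) k = shift_word d (k + 1) @ [(k, True)]"

lemma shift_word_in_lists: "1 \<le> k \<Longrightarrow> k + d \<le> n \<Longrightarrow> shift_word d k \<in> lists (br_gens n \<times> UNIV)"
  by (induction d k rule: shift_word.induct) (auto simp: br_gens_def)

lemma perm_of_shift_word:
  "perm_of_word (shift_word d k) k = k + d \<and> (\<forall>p < k. perm_of_word (shift_word d k) p = p)"
proof (induction d k rule: shift_word.induct)
  case (2 d k)
  then show ?case by (auto simp: perm_of_word_append Transposition.transpose_def)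
qed simp

lemma braid_word_realizes:
  "distinct xs \<Longrightarrow> set xs \<subseteq> {1..n} \<Longrightarrow>
   \<exists>w \<in> lists (br_gens n \<times> UNIV). \<forall>p < length xs. perm_of_word w (p + 1) = xs ! p"
proof (induction xs rule: rev_induct)
  case Nil
  then show ?case by (intro bexI[of _ "[]"]) auto
next
  case (snoc x ys)
  then obtain w0 where w0: "w0 \<in> lists (br_gens n \<times> UNIV)"
    "\<forall>p < length ys. perm_of_word w0 (p + 1) = ys ! p" by auto
  let ?m = "length ys"
  have "x \<in> perm_of_word w0 ` {1..n}"
    using snoc.prems permutes_image[OF perm_of_word_permutes[OF w0(1)]] by auto
  then obtain q where q: "q \<in> {1..n}" "perm_of_word w0 q = x" by auto
  have qm: "q \<ge> ?m + 1"
  proof (rule ccontr)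
    assume "\<not> q \<ge> ?m + 1"
    then obtain p where p: "p < ?m" "q = p + 1" using q by (cases q) auto
    then have "x = ys ! p" using w0 q by auto
    then show False using p snoc.prems(1) by (auto simp: nth_mem)
  qed
  define v where "v = shift_word (q - (?m + 1)) (?m + 1)"
  have v: "v \<in> lists (br_gens n \<times> UNIV)" unfolding v_def using q qm by (intro shift_word_in_lists) auto
  have vp: "perm_of_word v (?m + 1) = q" "\<forall>p < ?m + 1. perm_of_word v p = p"
    using perm_of_shift_word[of "q - (?m + 1)" "?m + 1"] qm unfolding v_def by auto
  show ?case
  proof (intro bexI[of _ "w0 @ v"] allI impI)
    fix p assume "p < length (ys @ [x])"
    then consider "p < ?m" | "p = ?m" by fastforce
    then show "perm_of_word (w0 @ v) (p + 1) = (ys @ [x]) ! p"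
      by cases (use vp w0 q in \<open>simp_all add: perm_of_word_append nth_append\<close>)
  qed (use w0 v in auto)
qed

section \<open>The action of permutations on the Steinberg group\<close>

definition relabel :: "(nat \<Rightarrow> nat) \<Rightarrow> (nat \<times> nat \<times> 'a) word \<Rightarrow> (nat \<times> nat \<times> 'a) word" where
  "relabel \<sigma> = map (\<lambda>((i, j, a), b). ((\<sigma> i, \<sigma> j, a), b))"

lemma relabel_simps [simp]:
  "relabel \<sigma> [] = []"
  "relabel \<sigma> (((i, j, a), b) # w) = ((\<sigma> i, \<sigma> j, a), b) # relabel \<sigma> w"
  "relabel \<sigma> (u @ v) = relabel \<sigma> u @ relabel \<sigma> v"
  by (auto simp: relabel_def)

lemma relabel_relabel: "relabel \<sigma> (relabel \<tau> w) = relabel (\<sigma> \<circ> \<tau>) w"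
  by (induction w) (auto simp: relabel_def)

lemma relabel_id: "relabel id w = w"
  by (induction w) (auto simp: relabel_def)

lemma word_eval_relabel:
  "word_eval K f (relabel \<sigma> w) = word_eval K (\<lambda>(i, j, a). f (\<sigma> i, \<sigma> j, a)) w"
proof (induction w)
  case (Cons x w)
  then show ?case by (cases x) auto
qed (simp add: relabel_def)

lemma st_gens_permute:
  assumes "\<sigma> permutes {1..n}" "(i, j, a) \<in> st_gens n"
  shows "(\<sigma> i, \<sigma> j, a) \<in> st_gens n"
proof -
  have "\<sigma> i \<noteq> \<sigma> j" using assms permutes_inj[OF assms(1)] by (auto simp: st_gens_def inj_eq)
  then show ?thesis using assms permutes_interval_apply[OF assms(1)] by (auto simp: st_gens_def)
qed

lemma relabel_in_lists:
  "\<sigma> permutes {1..n} \<Longrightarrow> w \<in> lists (st_gens n \<times> UNIV) \<Longrightarrow> relabel \<sigma> w \<in> lists (st_gens n \<times> UNIV)"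
  by (induction w) (auto simp: relabel_def st_gens_permute)

lemma relabel_st_rels:
  assumes "\<sigma> permutes {1..n}" "(u, v) \<in> st_rels n"
  shows "(relabel \<sigma> u, relabel \<sigma> v) \<in> st_rels n"
proof -
  have gen: "\<And>i j a. (i, j, a) \<in> st_gens n \<Longrightarrow> (\<sigma> i, \<sigma> j, a) \<in> st_gens n"
    using st_gens_permute[OF assms(1)] .
  have ne: "\<And>i j. \<sigma> i \<noteq> \<sigma> j \<longleftrightarrow> i \<noteq> j"
    using permutes_inj[OF assms(1)] by (simp add: inj_eq)
  from assms(2) consider
      (add) i j a b where "u = [((i, j, a), True), ((i, j, b), True)]" "v = [((i, j, a + b), True)]"
        "(i, j, a) \<in> st_gens n"
    | (comm) i j k l a b where "u = [((i, j, a), True), ((k, l, b), True)]"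
        "v = [((k, l, b), True), ((i, j, a), True)]"
        "(i, j, a) \<in> st_gens n" "(k, l, b) \<in> st_gens n" "i \<noteq> l" "j \<noteq> k"
    | (commutator) i j k a b where "u = [((i, j, a), True), ((j, k, b), True)]"
        "v = [((j, k, b), True), ((i, k, a * b), True), ((i, j, a), True)]"
        "(i, j, a) \<in> st_gens n" "(j, k, b) \<in> st_gens n" "i \<noteq> k"
    unfolding st_rels_def by blast
  then show ?thesis
  proof cases
    case add
    then show ?thesis using gen unfolding st_rels_def by auto
  next
    case comm
    then show ?thesis using gen[OF comm(3)] gen[OF comm(4)] ne unfolding st_rels_def by auto
  next
    case commutator
    then show ?thesis using gen[OF commutator(3)] gen[OF commutator(4)] ne
      unfolding st_rels_def by auto
  qed
qed

lemma relabel_pres_eq: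
  assumes "\<sigma> permutes {1..n}"
  shows "(u, v) \<in> pres_eq (st_gens n) (st_rels n) \<Longrightarrow>
    (relabel \<sigma> u, relabel \<sigma> v) \<in> pres_eq (st_gens n) (st_rels n)"
proof (induction rule: pres_eq.induct)
  case (refl w)
  then show ?case using relabel_in_lists[OF assms] by (auto intro: pres_eq.refl)
next
  case (sym u v)
  then show ?case by (auto intro: pres_eq.sym)
next
  case (trans u v w)
  then show ?case by (auto intro: pres_eq.trans)
next
  case (rel u v)
  then show ?case by (intro pres_eq.rel relabel_st_rels[OF assms] relabel_in_lists[OF assms])
next
  case (cancel g b)
  obtain i j a where g: "g = (i, j, a)" by (cases g) auto
  show ?case using pres_eq.cancel[of "(\<sigma> i, \<sigma> j, a)" "st_gens n" b "st_rels n"]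
      st_gens_permute[OF assms, of i j a] cancel g by simp
next
  case (cong u v w z)
  then show ?case using relabel_in_lists[OF assms] by (auto intro: pres_eq.cong)
qed

abbreviation st_class :: "nat \<Rightarrow> (nat \<times> nat \<times> 'a::ring) word \<Rightarrow> (nat \<times> nat \<times> 'a) word set" where
  "st_class n \<equiv> word_class (st_gens n) (st_rels n)"

abbreviation br_class :: "nat \<Rightarrow> nat word \<Rightarrow> nat word set" where
  "br_class n \<equiv> word_class (br_gens n) (br_rels n)"

lemma St_carrierE:
  assumes "s \<in> carrier (St n)"
  obtains w where "w \<in> lists (st_gens n \<times> UNIV)" "s = st_class n w"
  using assms unfolding St_def by (rule carrier_presented_groupE)

lemma st_act_word_class:
  assumes "\<sigma> permutes {1..n}" "w \<in> lists (st_gens n \<times> UNIV)"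
  shows "st_act n \<sigma> (st_class n w) = st_class n (relabel \<sigma> w)"
  unfolding st_act_def relabel_def[symmetric]
  by (rule word_class_eqI, rule pres_eq.sym,
      rule relabel_pres_eq[OF assms(1) pres_eq_rep_word_class[OF assms(2)]])

lemma st_act_closed:
  assumes "\<sigma> permutes {1..n}" "s \<in> carrier (St n)"
  shows "st_act n \<sigma> s \<in> carrier (St n)"
proof -
  obtain w where w: "w \<in> lists (st_gens n \<times> UNIV)" "s = st_class n w"
    using assms(2) by (rule St_carrierE)
  then show ?thesis using st_act_word_class[OF assms(1) w(1)] relabel_in_lists[OF assms(1) w(1)]
    by (simp add: St_def word_class_in_carrier)
qed

lemma st_act_mult:
  assumes "\<sigma> permutes {1..n}" "s \<in> carrier (St n)" "s' \<in> carrier (St n)"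
  shows "st_act n \<sigma> (s \<otimes>\<^bsub>St n\<^esub> s') = st_act n \<sigma> s \<otimes>\<^bsub>St n\<^esub> st_act n \<sigma> s'"
proof -
  obtain u v where u: "u \<in> lists (st_gens n \<times> UNIV)" "s = st_class n u"
    and v: "v \<in> lists (st_gens n \<times> UNIV)" "s' = st_class n v"
    using assms(2,3) by (metis St_carrierE)
  have "relabel \<sigma> u \<in> lists (st_gens n \<times> UNIV)" "relabel \<sigma> v \<in> lists (st_gens n \<times> UNIV)"
    using u v relabel_in_lists[OF assms(1)] by auto
  then show ?thesis using u v
    by (simp add: St_def mult_word_class st_act_word_class[OF assms(1)])
qed

lemma st_act_comp:
  assumes "\<sigma> permutes {1..n}" "\<tau> permutes {1..n}" "s \<in> carrier (St n)"
  shows "st_act n \<sigma> (st_act n \<tau> s) = st_act n (\<sigma> \<circ> \<tau>) s"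
proof -
  obtain w where w: "w \<in> lists (st_gens n \<times> UNIV)" "s = st_class n w"
    using assms(3) by (rule St_carrierE)
  then show ?thesis using relabel_in_lists[OF assms(2) w(1)] permutes_compose[OF assms(2,1)]
    by (simp add: st_act_word_class[OF assms(2)] st_act_word_class[OF assms(1)] st_act_word_class
        relabel_relabel)
qed

lemma st_act_id: "s \<in> carrier (St n) \<Longrightarrow> st_act n id s = s"
  by (metis St_carrierE permutes_id relabel_id st_act_word_class)

lemma st_act_one: "\<sigma> permutes {1..n} \<Longrightarrow> st_act n \<sigma> \<one>\<^bsub>St n\<^esub> = \<one>\<^bsub>St n\<^esub>"
  unfolding St_def one_presented_group by (subst st_act_word_class) auto

section \<open>The semidirect product\<close>

lemma StBr_mult:
  "(s, b) \<otimes>\<^bsub>StBr n\<^esub> (s', b') = (s \<otimes>\<^bsub>St n\<^esub> st_act n (perm_of_braid b) s', b \<otimes>\<^bsub>Br n\<^esub> b')"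
  by (simp add: StBr_def)

lemma StBr_one: "\<one>\<^bsub>StBr n\<^esub> = (\<one>\<^bsub>St n\<^esub>, \<one>\<^bsub>Br n\<^esub>)"
  by (simp add: StBr_def)

lemma StBr_carrier: "carrier (StBr n) = carrier (St n) \<times> carrier (Br n)"
  by (simp add: StBr_def)

lemma group_St: "group (St n)"
  unfolding St_def by (rule group_presented_group)

lemma group_Br: "group (Br n)"
  unfolding Br_def by (rule group_presented_group)

lemma group_BrA: "group (BrA n)"
  unfolding BrA_def by (rule group_presented_group)

lemma group_StBr: "group (StBr n :: ((nat \<times> nat \<times> 'a::ring) word set \<times> nat word set) monoid)"
proof -
  interpret S: group "St n :: (nat \<times> nat \<times> 'a) word set monoid" by (rule group_St)
  interpret B: group "Br n" by (rule group_Br)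
  note braid_act = st_act_closed[OF perm_of_braid_permutes] st_act_mult[OF perm_of_braid_permutes]
    st_act_comp[OF perm_of_braid_permutes perm_of_braid_permutes] st_act_one[OF perm_of_braid_permutes]
    st_act_closed[OF permutes_compose[OF perm_of_braid_permutes perm_of_braid_permutes]]
  define H where "H = (StBr n :: ((nat \<times> nat \<times> 'a) word set \<times> nat word set) monoid)"
  show ?thesis unfolding H_def[symmetric]
  proof (rule groupI)
    fix x y assume "x \<in> carrier H" "y \<in> carrier H"
    then show "x \<otimes>\<^bsub>H\<^esub> y \<in> carrier H"
      by (auto simp: H_def StBr_carrier StBr_mult braid_act)
  next
    show "\<one>\<^bsub>H\<^esub> \<in> carrier H" by (simp add: H_def StBr_one StBr_carrier)
  next
    fix x y z assume "x \<in> carrier H" "y \<in> carrier H" "z \<in> carrier H"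
    then show "x \<otimes>\<^bsub>H\<^esub> y \<otimes>\<^bsub>H\<^esub> z = x \<otimes>\<^bsub>H\<^esub> (y \<otimes>\<^bsub>H\<^esub> z)"
      by (auto simp: H_def StBr_carrier StBr_mult braid_act perm_of_braid_mult S.m_assoc B.m_assoc)
  next
    fix x assume "x \<in> carrier H"
    then show "\<one>\<^bsub>H\<^esub> \<otimes>\<^bsub>H\<^esub> x = x"
      by (auto simp: H_def StBr_carrier StBr_mult StBr_one perm_of_braid_one st_act_id)
  next
    fix x assume x: "x \<in> carrier H"
    then obtain s b where sb: "x = (s, b)" "s \<in> carrier (St n)" "b \<in> carrier (Br n)"
      by (auto simp: H_def StBr_carrier)
    let ?y = "(st_act n (perm_of_braid (inv\<^bsub>Br n\<^esub> b)) (inv\<^bsub>St n\<^esub> s), inv\<^bsub>Br n\<^esub> b)"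
    have "?y \<otimes>\<^bsub>H\<^esub> x = \<one>\<^bsub>H\<^esub>"
      using sb by (simp add: H_def StBr_mult StBr_one braid_act(2)[symmetric] braid_act(4))
    moreover have "?y \<in> carrier H"
      using sb by (simp add: H_def StBr_carrier braid_act)
    ultimately show "\<exists>y\<in>carrier H. y \<otimes>\<^bsub>H\<^esub> x = \<one>\<^bsub>H\<^esub>" by blast
  qed
qed

definition st_incl :: "nat \<Rightarrow> (nat \<times> nat \<times> 'a::ring) word set \<Rightarrow> (nat \<times> nat \<times> 'a) word set \<times> nat word set" where
  "st_incl n s = (s, \<one>\<^bsub>Br n\<^esub>)"

definition br_incl :: "nat \<Rightarrow> nat word set \<Rightarrow> (nat \<times> nat \<times> 'a::ring) word set \<times> nat word set" where
  "br_incl n b = (\<one>\<^bsub>St n\<^esub>, b)"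

lemma st_incl_hom: "st_incl n \<in> hom (St n) (StBr n :: ((nat \<times> nat \<times> 'a::ring) word set \<times> nat word set) monoid)"
proof -
  interpret B: group "Br n" by (rule group_Br)
  show ?thesis
    by (rule homI) (auto simp: st_incl_def StBr_carrier StBr_mult perm_of_braid_one st_act_id)
qed

lemma br_incl_hom: "(br_incl n :: _ \<Rightarrow> (nat \<times> nat \<times> 'a::ring) word set \<times> nat word set) \<in> hom (Br n) (StBr n)"
proof -
  interpret S: group "St n :: (nat \<times> nat \<times> 'a) word set monoid" by (rule group_St)
  show ?thesis
    by (rule homI)
      (auto simp: br_incl_def StBr_carrier StBr_mult st_act_one[OF perm_of_braid_permutes])
qed

lemma st_incl_mult_br_incl:
  "s \<in> carrier (St n) \<Longrightarrow> b \<in> carrier (Br n) \<Longrightarrow>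
    st_incl n s \<otimes>\<^bsub>StBr n\<^esub> br_incl n b = (s :: (nat \<times> nat \<times> 'a::ring) word set, b)"
proof -
  interpret S: group "St n :: (nat \<times> nat \<times> 'a) word set monoid" by (rule group_St)
  interpret B: group "Br n" by (rule group_Br)
  show "s \<in> carrier (St n) \<Longrightarrow> b \<in> carrier (Br n) \<Longrightarrow> st_incl n s \<otimes>\<^bsub>StBr n\<^esub> br_incl n b = (s, b)"
    by (simp add: st_incl_def br_incl_def StBr_mult perm_of_braid_one st_act_id)
qed

lemma br_incl_mult_st_incl:
  "s \<in> carrier (St n) \<Longrightarrow> b \<in> carrier (Br n) \<Longrightarrow>
    br_incl n b \<otimes>\<^bsub>StBr n\<^esub> st_incl n s =
    st_incl n (st_act n (perm_of_braid b) (s :: (nat \<times> nat \<times> 'a::ring) word set)) \<otimes>\<^bsub>StBr n\<^esub> br_incl n b"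
proof -
  interpret S: group "St n :: (nat \<times> nat \<times> 'a) word set monoid" by (rule group_St)
  interpret B: group "Br n" by (rule group_Br)
  show "s \<in> carrier (St n) \<Longrightarrow> b \<in> carrier (Br n) \<Longrightarrow> br_incl n b \<otimes>\<^bsub>StBr n\<^esub> st_incl n s =
      st_incl n (st_act n (perm_of_braid b) s) \<otimes>\<^bsub>StBr n\<^esub> br_incl n b"
    by (simp add: st_incl_def br_incl_def StBr_mult perm_of_braid_one st_act_id
        st_act_closed[OF perm_of_braid_permutes] st_act_one[OF perm_of_braid_permutes])
qed

definition (in group) cj :: "'a \<Rightarrow> 'a \<Rightarrow> 'a" where
  "cj g x = g \<otimes> x \<otimes> inv g"

context group
begin

lemma inv_mult_cancel_left [simp]: "g \<in> carrier G \<Longrightarrow> x \<in> carrier G \<Longrightarrow> inv g \<otimes> (g \<otimes> x) = x"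
  by (simp add: m_assoc[symmetric])

lemma mult_inv_cancel_left [simp]: "g \<in> carrier G \<Longrightarrow> x \<in> carrier G \<Longrightarrow> g \<otimes> (inv g \<otimes> x) = x"
  by (simp add: m_assoc[symmetric])

lemma mult_inv_cancel_right [simp]: "g \<in> carrier G \<Longrightarrow> x \<in> carrier G \<Longrightarrow> x \<otimes> g \<otimes> inv g = x"
  by (simp add: m_assoc)

lemma inv_mult_cancel_right [simp]: "g \<in> carrier G \<Longrightarrow> x \<in> carrier G \<Longrightarrow> x \<otimes> inv g \<otimes> g = x"
  by (simp add: m_assoc)

lemma cj_closed [simp]: "g \<in> carrier G \<Longrightarrow> x \<in> carrier G \<Longrightarrow> cj g x \<in> carrier G"
  by (simp add: cj_def)

lemma cj_mult_left:
  "g \<in> carrier G \<Longrightarrow> h \<in> carrier G \<Longrightarrow> x \<in> carrier G \<Longrightarrow> cj (g \<otimes> h) x = cj g (cj h x)"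
  by (simp add: cj_def inv_mult_group m_assoc)

lemma cj_mult_right:
  "g \<in> carrier G \<Longrightarrow> x \<in> carrier G \<Longrightarrow> z \<in> carrier G \<Longrightarrow> cj g (x \<otimes> z) = cj g x \<otimes> cj g z"
  by (simp add: cj_def m_assoc)

lemma cj_eq_iff:
  assumes "g \<in> carrier G" "x \<in> carrier G" "z \<in> carrier G"
  shows "cj g x = z \<longleftrightarrow> g \<otimes> x = z \<otimes> g"
proof -
  have "cj g x = z \<longleftrightarrow> cj g x \<otimes> g = z \<otimes> g" using assms by (intro right_cancel[symmetric]) auto
  also have "cj g x \<otimes> g = g \<otimes> x" using assms by (simp add: cj_def m_assoc)
  finally show ?thesis .
qed

lemma cj_one_left [simp]: "x \<in> carrier G \<Longrightarrow> cj \<one> x = x"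
  by (simp add: cj_def)

lemma cj_one_right [simp]: "g \<in> carrier G \<Longrightarrow> cj g \<one> = \<one>"
  by (simp add: cj_def)

lemma cj_inv_cj [simp]: "g \<in> carrier G \<Longrightarrow> x \<in> carrier G \<Longrightarrow> cj (inv g) (cj g x) = x"
  by (simp add: cj_def m_assoc)

lemma cj_cj_inv [simp]: "g \<in> carrier G \<Longrightarrow> x \<in> carrier G \<Longrightarrow> cj g (cj (inv g) x) = x"
  by (simp add: cj_def m_assoc)

lemma cj_inv_fixed: "g \<in> carrier G \<Longrightarrow> x \<in> carrier G \<Longrightarrow> cj g x = x \<Longrightarrow> cj (inv g) x = x"
  by (metis cj_inv_cj)

lemma cj_commute:
  "g \<in> carrier G \<Longrightarrow> h \<in> carrier G \<Longrightarrow> x \<in> carrier G \<Longrightarrow> g \<otimes> h = h \<otimes> g \<Longrightarrow>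
   cj g (cj h x) = cj h (cj g x)"
  by (simp add: cj_mult_left[symmetric])

lemma cj_hom: "g \<in> carrier G \<Longrightarrow> cj g \<in> hom G G"
  by (rule homI) (auto simp: cj_mult_right)

lemma cj_preserves_commute:
  "g \<in> carrier G \<Longrightarrow> x \<in> carrier G \<Longrightarrow> z \<in> carrier G \<Longrightarrow> x \<otimes> z = z \<otimes> x \<Longrightarrow>
   cj g x \<otimes> cj g z = cj g z \<otimes> cj g x"
  by (simp add: cj_mult_right[symmetric])

end

section \<open>Groups satisfying the relations of the parametrized braid group\<close>

locale param_braid_relations = group G for G :: "('g, 'm) monoid_scheme" (structure) +
  fixes n :: nat and y :: "nat \<Rightarrow> 'a::ring \<Rightarrow> 'g"
  assumes y_closed: "\<lbrakk>1 \<le> i; i \<le> n - 1\<rbrakk> \<Longrightarrow> y i a \<in> carrier G"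
  and A1: "\<lbrakk>1 \<le> i; i \<le> n - 1\<rbrakk> \<Longrightarrow> y i a \<otimes> y i 0 \<otimes> y i b = y i 0 \<otimes> y i 0 \<otimes> y i (a + b)"
  and A1xA1: "\<lbrakk>1 \<le> i; i \<le> n - 1; 1 \<le> j; j \<le> n - 1; i + 2 \<le> j \<or> j + 2 \<le> i\<rbrakk> \<Longrightarrow>
      y i a \<otimes> y j b = y j b \<otimes> y i a"
  and A2: "\<lbrakk>1 \<le> i; i + 1 \<le> n - 1\<rbrakk> \<Longrightarrow>
      y i a \<otimes> y (i + 1) b \<otimes> y i c = y (i + 1) c \<otimes> y i (b + a * c) \<otimes> y (i + 1) a"
begin

text \<open>\<open>t i\<close> and \<open>X i a\<close> are the candidate preimages of \<open>y\<^sub>i\<close> and \<open>x\<^sub>i\<^sub>,\<^sub>i\<^sub>+\<^sub>1\<^sup>a\<close>,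
  \<open>Z i a\<close> that of \<open>x\<^sub>i\<^sub>+\<^sub>1\<^sub>,\<^sub>i\<^sup>a\<close>.\<close>

definition t :: "nat \<Rightarrow> 'g" where "t i = y i 0"
definition X :: "nat \<Rightarrow> 'a \<Rightarrow> 'g" where "X i a = y i a \<otimes> inv (t i)"
definition Z :: "nat \<Rightarrow> 'a \<Rightarrow> 'g" where "Z i a = cj (t i) (X i a)"

lemma t_closed [simp]: "1 \<le> i \<Longrightarrow> i \<le> n - 1 \<Longrightarrow> t i \<in> carrier G"
  by (simp add: t_def y_closed)

lemma X_closed [simp]: "1 \<le> i \<Longrightarrow> i \<le> n - 1 \<Longrightarrow> X i a \<in> carrier G"
  by (simp add: X_def y_closed)

lemma X_zero [simp]: "1 \<le> i \<Longrightarrow> i \<le> n - 1 \<Longrightarrow> X i 0 = \<one>"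
  by (simp add: X_def t_def y_closed)

lemma y_eq_X_t: "1 \<le> i \<Longrightarrow> i \<le> n - 1 \<Longrightarrow> y i a = X i a \<otimes> t i"
  by (simp add: X_def m_assoc y_closed)

lemma X_t_sq_commute: assumes "1 \<le> i" "i \<le> n - 1"
  shows "X i a \<otimes> t i \<otimes> t i = t i \<otimes> t i \<otimes> X i a"
proof -
  have "y i a \<otimes> y i 0 \<otimes> y i 0 = y i 0 \<otimes> y i 0 \<otimes> y i a" using A1[OF assms, of a 0] by simp
  then show ?thesis using assms by (simp add: y_eq_X_t m_assoc[symmetric])
qed

lemma cj_t_sq_X: assumes "1 \<le> i" "i \<le> n - 1"
  shows "cj (t i) (cj (t i) (X i a)) = X i a"
  using assms X_t_sq_commute[OF assms] by (simp add: cj_mult_left[symmetric] cj_eq_iff m_assoc[symmetric])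

lemma X_add: assumes "1 \<le> i" "i \<le> n - 1"
  shows "X i a \<otimes> X i b = X i (a + b)"
proof -
  have "X i a \<otimes> t i \<otimes> t i \<otimes> X i b = t i \<otimes> t i \<otimes> X i (a + b)"
    using A1[OF assms, of a b] assms by (simp add: y_eq_X_t m_assoc[symmetric])
  then have "(t i \<otimes> t i) \<otimes> (X i a \<otimes> X i b) = (t i \<otimes> t i) \<otimes> X i (a + b)"
    using X_t_sq_commute[OF assms] assms by (simp add: m_assoc[symmetric])
  then show ?thesis using assms by simp
qed

lemma t_commute_far: assumes "1 \<le> i" "i \<le> n - 1" "1 \<le> j" "j \<le> n - 1" "i + 2 \<le> j \<or> j + 2 \<le> i"
  shows "t i \<otimes> t j = t j \<otimes> t i"
  using A1xA1[OF assms, of 0 0] by (simp add: t_def)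

lemma X_t_commute_far: assumes "1 \<le> i" "i \<le> n - 1" "1 \<le> j" "j \<le> n - 1" "i + 2 \<le> j \<or> j + 2 \<le> i"
  shows "X i a \<otimes> t j = t j \<otimes> X i a"
proof -
  have "X i a \<otimes> t i \<otimes> t j = t j \<otimes> X i a \<otimes> t i"
    using A1xA1[OF assms, of a 0] assms by (simp add: y_eq_X_t m_assoc[symmetric])
  then have "X i a \<otimes> t j \<otimes> t i = t j \<otimes> X i a \<otimes> t i"
    using t_commute_far[OF assms] assms by (simp add: m_assoc)
  then show ?thesis using assms by simp
qed

lemma cj_t_X_far: assumes "1 \<le> i" "i \<le> n - 1" "1 \<le> j" "j \<le> n - 1" "i + 2 \<le> j \<or> j + 2 \<le> i"
  shows "cj (t j) (X i a) = X i a"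
  using assms X_t_commute_far[OF assms] by (simp add: cj_eq_iff)

lemma X_commute_far: assumes "1 \<le> i" "i \<le> n - 1" "1 \<le> j" "j \<le> n - 1" "i + 2 \<le> j \<or> j + 2 \<le> i"
  shows "X i a \<otimes> X j b = X j b \<otimes> X i a"
proof -
  have ji: "j + 2 \<le> i \<or> i + 2 \<le> j" using assms by auto
  have "X i a \<otimes> t i \<otimes> X j b \<otimes> t j = X j b \<otimes> t j \<otimes> X i a \<otimes> t i"
    using A1xA1[OF assms, of a b] assms by (simp add: y_eq_X_t m_assoc[symmetric])
  then have "X i a \<otimes> (t i \<otimes> X j b) \<otimes> t j = X j b \<otimes> (t j \<otimes> X i a) \<otimes> t i"
    using assms by (simp add: m_assoc)
  then have "X i a \<otimes> (X j b \<otimes> t i) \<otimes> t j = X j b \<otimes> (X i a \<otimes> t j) \<otimes> t i"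
    using X_t_commute_far[OF assms, of a] X_t_commute_far[OF assms(3,4,1,2) ji, of b] by simp
  then have "X i a \<otimes> X j b \<otimes> (t i \<otimes> t j) = X j b \<otimes> X i a \<otimes> (t j \<otimes> t i)"
    using assms by (simp add: m_assoc)
  then show ?thesis using assms t_commute_far[OF assms] by simp
qed

lemma t_braid: assumes "1 \<le> i" "i + 1 \<le> n - 1"
  shows "t i \<otimes> t (i + 1) \<otimes> t i = t (i + 1) \<otimes> t i \<otimes> t (i + 1)"
  using A2[OF assms, of 0 0 0] by (simp add: t_def)

lemma cj_t_t_succ_X: assumes "1 \<le> i" "i + 1 \<le> n - 1"
  shows "cj (t i) (cj (t (i + 1)) (X i c)) = X (i + 1) c"
proof -
  have "t i \<otimes> t (i + 1) \<otimes> X i c \<otimes> t i = X (i + 1) c \<otimes> t (i + 1) \<otimes> t i \<otimes> t (i + 1)"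
    using A2[OF assms, of 0 0 c] assms by (simp add: y_eq_X_t m_assoc[symmetric])
  also have "\<dots> = X (i + 1) c \<otimes> (t i \<otimes> t (i + 1) \<otimes> t i)"
    using t_braid[OF assms] assms by (simp add: m_assoc)
  finally have "t i \<otimes> t (i + 1) \<otimes> X i c = X (i + 1) c \<otimes> t i \<otimes> t (i + 1)"
    using assms by (simp add: m_assoc[symmetric])
  then show ?thesis using assms by (simp add: cj_mult_left[symmetric] cj_eq_iff m_assoc[symmetric])
qed

lemma cj_t_succ_t_X_succ: assumes "1 \<le> i" "i + 1 \<le> n - 1"
  shows "cj (t (i + 1)) (cj (t i) (X (i + 1) a)) = X i a"
proof -
  have "X i a \<otimes> t i \<otimes> t (i + 1) \<otimes> t i = t (i + 1) \<otimes> t i \<otimes> X (i + 1) a \<otimes> t (i + 1)"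
    using A2[OF assms, of a 0 0] assms by (simp add: y_eq_X_t m_assoc[symmetric])
  moreover have "X i a \<otimes> t i \<otimes> t (i + 1) \<otimes> t i = X i a \<otimes> t (i + 1) \<otimes> t i \<otimes> t (i + 1)"
    using t_braid[OF assms] assms by (simp add: m_assoc)
  ultimately have "t (i + 1) \<otimes> t i \<otimes> X (i + 1) a = X i a \<otimes> t (i + 1) \<otimes> t i"
    using assms by simp
  then show ?thesis using assms by (simp add: cj_mult_left[symmetric] cj_eq_iff m_assoc[symmetric])
qed

lemma cj_t_X_succ: assumes "1 \<le> i" "i + 1 \<le> n - 1"
  shows "cj (t i) (X (i + 1) b) = cj (t (i + 1)) (X i b)"
proof -
  have "t i \<otimes> X (i + 1) b \<otimes> t (i + 1) \<otimes> t i = t (i + 1) \<otimes> X i b \<otimes> t i \<otimes> t (i + 1)"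
    using A2[OF assms, of 0 b 0] assms by (simp add: y_eq_X_t m_assoc[symmetric])
  then have "cj (t i) (X (i + 1) b) \<otimes> (t i \<otimes> t (i + 1) \<otimes> t i) =
      cj (t (i + 1)) (X i b) \<otimes> (t (i + 1) \<otimes> t i \<otimes> t (i + 1))"
    using assms by (simp add: cj_def m_assoc[symmetric])
  then show ?thesis using assms t_braid[OF assms] by simp
qed

lemma cj_t_succ_sq_X: assumes "1 \<le> i" "i + 1 \<le> n - 1"
  shows "cj (t (i + 1)) (cj (t (i + 1)) (X i a)) = X i a"
  using cj_t_X_succ[OF assms, of a, symmetric] cj_t_succ_t_X_succ[OF assms, of a] by simp

lemma cj_t_sq_X_succ: assumes "1 \<le> i" "i + 1 \<le> n - 1"
  shows "cj (t i) (cj (t i) (X (i + 1) a)) = X (i + 1) a"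
  using cj_t_X_succ[OF assms, of a] cj_t_t_succ_X[OF assms, of a] by simp

text \<open>Relation (A2) in terms of \<open>X\<close>: the Steinberg relations among the indices \<open>i, i+1, i+2\<close>.\<close>

lemma X_A2: assumes "1 \<le> i" "i + 1 \<le> n - 1"
  shows "X i a \<otimes> cj (t (i + 1)) (X i b) \<otimes> X (i + 1) c =
    X (i + 1) c \<otimes> cj (t (i + 1)) (X i (b + a * c)) \<otimes> X i a"
proof -
  have "X i a \<otimes> t i \<otimes> X (i + 1) b \<otimes> t (i + 1) \<otimes> X i c \<otimes> t i =
      X (i + 1) c \<otimes> t (i + 1) \<otimes> X i (b + a * c) \<otimes> t i \<otimes> X (i + 1) a \<otimes> t (i + 1)"
    using A2[OF assms, of a b c] assms by (simp add: y_eq_X_t m_assoc[symmetric])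
  moreover have "X i a \<otimes> t i \<otimes> X (i + 1) b \<otimes> t (i + 1) \<otimes> X i c \<otimes> t i =
      X i a \<otimes> cj (t i) (X (i + 1) b) \<otimes> cj (t i \<otimes> t (i + 1)) (X i c) \<otimes> (t i \<otimes> t (i + 1) \<otimes> t i)"
    using assms by (simp add: cj_def m_assoc[symmetric] inv_mult_group)
  moreover have "X (i + 1) c \<otimes> t (i + 1) \<otimes> X i (b + a * c) \<otimes> t i \<otimes> X (i + 1) a \<otimes> t (i + 1) =
      X (i + 1) c \<otimes> cj (t (i + 1)) (X i (b + a * c)) \<otimes> cj (t (i + 1) \<otimes> t i) (X (i + 1) a)
        \<otimes> (t (i + 1) \<otimes> t i \<otimes> t (i + 1))"
    using assms by (simp add: cj_def m_assoc[symmetric] inv_mult_group)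
  ultimately have "X i a \<otimes> cj (t i) (X (i + 1) b) \<otimes> cj (t i \<otimes> t (i + 1)) (X i c) =
      X (i + 1) c \<otimes> cj (t (i + 1)) (X i (b + a * c)) \<otimes> cj (t (i + 1) \<otimes> t i) (X (i + 1) a)"
    using t_braid[OF assms] assms by simp
  then show ?thesis
    using assms cj_t_t_succ_X[OF assms, of c] cj_t_succ_t_X_succ[OF assms, of a] cj_t_X_succ[OF assms, of b]
    by (simp add: cj_mult_left)
qed

lemma cj_t_braid: assumes "1 \<le> m" "m + 1 \<le> n - 1" "x \<in> carrier G"
  shows "cj (t m) (cj (t (m + 1)) (cj (t m) x)) = cj (t (m + 1)) (cj (t m) (cj (t (m + 1)) x))"
proof -
  have c: "t m \<in> carrier G" "t (m + 1) \<in> carrier G" using assms by auto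
  have "cj (t m) (cj (t (m + 1)) (cj (t m) x)) = cj (t m \<otimes> t (m + 1) \<otimes> t m) x"
    using c assms by (simp add: cj_mult_left)
  also have "\<dots> = cj (t (m + 1) \<otimes> t m \<otimes> t (m + 1)) x" using t_braid[OF assms(1,2)] by simp
  also have "\<dots> = cj (t (m + 1)) (cj (t m) (cj (t (m + 1)) x))"
    using c assms by (simp add: cj_mult_left)
  finally show ?thesis .
qed

lemma t_succ_sq_t: assumes "1 \<le> m" "m + 1 \<le> n - 1"
  shows "t (m + 1) \<otimes> t (m + 1) \<otimes> t m = t m \<otimes> t (m + 1) \<otimes> t m \<otimes> t m \<otimes> inv (t (m + 1))"
proof -
  have c: "t m \<in> carrier G" "t (m + 1) \<in> carrier G" using assms by auto
  have "t (m + 1) \<otimes> t (m + 1) \<otimes> t m = t (m + 1) \<otimes> (t m \<otimes> t (m + 1) \<otimes> t m) \<otimes> inv (t (m + 1))"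
    using c t_braid[OF assms] by (simp add: m_assoc)
  also have "\<dots> = (t (m + 1) \<otimes> t m \<otimes> t (m + 1)) \<otimes> t m \<otimes> inv (t (m + 1))"
    using c by (simp add: m_assoc)
  also have "\<dots> = t m \<otimes> t (m + 1) \<otimes> t m \<otimes> t m \<otimes> inv (t (m + 1))"
    using t_braid[OF assms] by simp
  finally show ?thesis .
qed

lemma cj_t_succ_sq_t: assumes "1 \<le> m" "m + 1 \<le> n - 1" "x \<in> carrier G"
  shows "cj (t (m + 1)) (cj (t (m + 1)) (cj (t m) x)) =
    cj (t m) (cj (t (m + 1)) (cj (t m) (cj (t m) (cj (inv (t (m + 1))) x))))"
proof -
  have c: "t m \<in> carrier G" "t (m + 1) \<in> carrier G" using assms by auto
  have "cj (t (m + 1)) (cj (t (m + 1)) (cj (t m) x)) = cj (t (m + 1) \<otimes> t (m + 1) \<otimes> t m) x"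
    using c assms by (simp add: cj_mult_left)
  also have "\<dots> = cj (t m \<otimes> t (m + 1) \<otimes> t m \<otimes> t m \<otimes> inv (t (m + 1))) x"
    using t_succ_sq_t[OF assms(1,2)] by simp
  also have "\<dots> = cj (t m) (cj (t (m + 1)) (cj (t m) (cj (t m) (cj (inv (t (m + 1))) x))))"
    using c assms by (simp add: cj_mult_left)
  finally show ?thesis .
qed

lemma cj_t_commute_far: assumes "1 \<le> i" "i \<le> n - 1" "1 \<le> j" "j \<le> n - 1" "i + 2 \<le> j \<or> j + 2 \<le> i"
    "x \<in> carrier G"
  shows "cj (t i) (cj (t j) x) = cj (t j) (cj (t i) x)"
  using assms by (intro cj_commute t_commute_far) auto

text \<open>An adjacent family is modelled on the elements attached to the pairs \<open>(i, i+1)\<close>, with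
  conjugation by \<open>t k\<close> acting like the transposition \<open>(k k+1)\<close>; \<open>adj_ext B i d\<close> is then the
  element attached to the pair \<open>(i, i+d+1)\<close>.  The family \<open>X\<close> yields the pairs \<open>i < j\<close>,
  the family \<open>Z\<close> the pairs \<open>i > j\<close>.\<close>

definition adj_family :: "(nat \<Rightarrow> 'g) \<Rightarrow> bool" where
  "adj_family B \<longleftrightarrow> (\<forall>i. 1 \<le> i \<longrightarrow> i \<le> n - 1 \<longrightarrow> B i \<in> carrier G) \<and>
   (\<forall>i k. 1 \<le> i \<longrightarrow> i \<le> n - 1 \<longrightarrow> 1 \<le> k \<longrightarrow> k \<le> n - 1 \<longrightarrow> (k + 2 \<le> i \<or> i + 2 \<le> k) \<longrightarrow>
      cj (t k) (B i) = B i) \<and>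
   (\<forall>i. 1 \<le> i \<longrightarrow> i + 1 \<le> n - 1 \<longrightarrow> cj (t (i + 1)) (cj (t (i + 1)) (B i)) = B i) \<and>
   (\<forall>i. 1 \<le> i \<longrightarrow> i + 1 \<le> n - 1 \<longrightarrow> cj (t i) (cj (t (i + 1)) (B i)) = B (i + 1)) \<and>
   (\<forall>i. 1 \<le> i \<longrightarrow> i + 1 \<le> n - 1 \<longrightarrow> cj (t i) (B (i + 1)) = cj (t (i + 1)) (B i))"

lemma adj_family_closed:
  "adj_family B \<Longrightarrow> 1 \<le> i \<Longrightarrow> i \<le> n - 1 \<Longrightarrow> B i \<in> carrier G"
  unfolding adj_family_def by blast

lemma adj_family_far:
  "adj_family B \<Longrightarrow> 1 \<le> i \<Longrightarrow> i \<le> n - 1 \<Longrightarrow> 1 \<le> k \<Longrightarrow> k \<le> n - 1 \<Longrightarrow> k + 2 \<le> i \<or> i + 2 \<le> k \<Longrightarrow>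
    cj (t k) (B i) = B i"
  unfolding adj_family_def by blast

lemma adj_family_succ_sq:
  "adj_family B \<Longrightarrow> 1 \<le> i \<Longrightarrow> i + 1 \<le> n - 1 \<Longrightarrow> cj (t (i + 1)) (cj (t (i + 1)) (B i)) = B i"
  unfolding adj_family_def by blast

lemma adj_family_shift:
  "adj_family B \<Longrightarrow> 1 \<le> i \<Longrightarrow> i + 1 \<le> n - 1 \<Longrightarrow> cj (t i) (cj (t (i + 1)) (B i)) = B (i + 1)"
  unfolding adj_family_def by blast

lemma adj_family_succ:
  "adj_family B \<Longrightarrow> 1 \<le> i \<Longrightarrow> i + 1 \<le> n - 1 \<Longrightarrow> cj (t i) (B (i + 1)) = cj (t (i + 1)) (B i)"
  unfolding adj_family_def by blast

lemma adj_family_X: "adj_family (\<lambda>i. X i a)"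
  unfolding adj_family_def
  using cj_t_X_far cj_t_succ_sq_X cj_t_t_succ_X cj_t_X_succ by auto

lemma cj_t_Z_far: assumes "1 \<le> i" "i \<le> n - 1" "1 \<le> k" "k \<le> n - 1" "k + 2 \<le> i \<or> i + 2 \<le> k"
  shows "cj (t k) (Z i a) = Z i a"
proof -
  have "cj (t k) (cj (t i) (X i a)) = cj (t i) (cj (t k) (X i a))"
    using assms by (intro cj_t_commute_far) auto
  also have "\<dots> = cj (t i) (X i a)" using assms cj_t_X_far[of i k a] by auto
  finally show ?thesis by (simp add: Z_def)
qed

lemma cj_t_succ_sq_Z: assumes "1 \<le> i" "i + 1 \<le> n - 1"
  shows "cj (t (i + 1)) (cj (t (i + 1)) (Z i a)) = Z i a"
proof -
  have c: "t i \<in> carrier G" "t (i + 1) \<in> carrier G" "X i a \<in> carrier G" "X (i + 1) a \<in> carrier G"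
    using assms by auto
  have "cj (inv (t (i + 1))) (X i a) = cj (inv (t (i + 1))) (cj (t (i + 1)) (cj (t (i + 1)) (X i a)))"
    using cj_t_succ_sq_X[OF assms, of a] by simp
  also have "\<dots> = cj (t i) (X (i + 1) a)" using c cj_t_X_succ[OF assms, of a] by simp
  finally have inv_t_X: "cj (inv (t (i + 1))) (X i a) = cj (t i) (X (i + 1) a)" .
  have "cj (t (i + 1)) (cj (t (i + 1)) (cj (t i) (X i a))) =
    cj (t i) (cj (t (i + 1)) (cj (t i) (cj (t i) (cj (inv (t (i + 1))) (X i a)))))"
    using assms c by (intro cj_t_succ_sq_t) auto
  also have "\<dots> = cj (t i) (cj (t (i + 1)) (cj (t i) (X (i + 1) a)))"
    using inv_t_X cj_t_sq_X_succ[OF assms, of a] by simp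
  also have "\<dots> = cj (t i) (X i a)" using cj_t_succ_t_X_succ[OF assms, of a] by simp
  finally show ?thesis by (simp add: Z_def)
qed

lemma cj_t_t_succ_Z: assumes "1 \<le> i" "i + 1 \<le> n - 1"
  shows "cj (t i) (cj (t (i + 1)) (Z i a)) = Z (i + 1) a"
proof -
  have "cj (t i) (cj (t (i + 1)) (cj (t i) (X i a))) = cj (t (i + 1)) (cj (t i) (cj (t (i + 1)) (X i a)))"
    using assms by (intro cj_t_braid) auto
  also have "\<dots> = cj (t (i + 1)) (X (i + 1) a)" using cj_t_t_succ_X[OF assms, of a] by simp
  finally show ?thesis by (simp add: Z_def)
qed

lemma cj_t_Z_succ: assumes "1 \<le> i" "i + 1 \<le> n - 1"
  shows "cj (t i) (Z (i + 1) a) = cj (t (i + 1)) (Z i a)"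
proof -
  have "cj (t i) (cj (t (i + 1)) (X (i + 1) a)) =
      cj (t i) (cj (t (i + 1)) (cj (t i) (cj (t (i + 1)) (X i a))))"
    using cj_t_t_succ_X[OF assms, of a] by simp
  also have "\<dots> = cj (t (i + 1)) (cj (t i) (cj (t (i + 1)) (cj (t (i + 1)) (X i a))))"
    using assms by (intro cj_t_braid) auto
  also have "\<dots> = cj (t (i + 1)) (cj (t i) (X i a))" using cj_t_succ_sq_X[OF assms, of a] by simp
  finally show ?thesis by (simp add: Z_def)
qed

lemma adj_family_Z: "adj_family (\<lambda>i. Z i a)"
  unfolding adj_family_def
  using cj_t_Z_far cj_t_succ_sq_Z cj_t_t_succ_Z cj_t_Z_succ by (auto simp: Z_def)

primrec adj_ext :: "(nat \<Rightarrow> 'g) \<Rightarrow> nat \<Rightarrow> nat \<Rightarrow> 'g" where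
  "adj_ext B i 0 = B i"
| "adj_ext B i (Suc d) = cj (t (i + d + 1)) (adj_ext B i d)"

lemma adj_ext_closed: "adj_family B \<Longrightarrow> 1 \<le> i \<Longrightarrow> i + d + 1 \<le> n \<Longrightarrow> adj_ext B i d \<in> carrier G"
  by (induction d) (auto simp: adj_family_closed)

lemma adj_ext_fixed_outside:
  assumes "adj_family B" "1 \<le> i" "i + d + 1 \<le> n" "1 \<le> k" "k \<le> n - 1" "k + 2 \<le> i \<or> i + d + 2 \<le> k"
  shows "cj (t k) (adj_ext B i d) = adj_ext B i d"
  using assms(3,6)
proof (induction d)
  case 0
  then show ?case using assms by (simp add: adj_family_far)
next
  case (Suc d)
  have "cj (t k) (cj (t (i + d + 1)) (adj_ext B i d)) = cj (t (i + d + 1)) (cj (t k) (adj_ext B i d))"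
    using Suc assms by (intro cj_t_commute_far adj_ext_closed) auto
  also have "cj (t k) (adj_ext B i d) = adj_ext B i d" using Suc by auto
  finally show ?case by simp
qed

lemma cj_t_sq_adj_ext: assumes "adj_family B" "1 \<le> i" "i + d + 1 \<le> n - 1"
  shows "cj (t (i + d + 1)) (cj (t (i + d + 1)) (adj_ext B i d)) = adj_ext B i d"
  using assms(3)
proof (induction d)
  case 0
  then show ?case using adj_family_succ_sq[OF assms(1,2)] by simp
next
  case (Suc d)
  let ?m = "i + d + 1"
  have V: "adj_ext B i d \<in> carrier G" using Suc assms by (intro adj_ext_closed) auto
  have fix1: "cj (t (?m + 1)) (adj_ext B i d) = adj_ext B i d"
    using Suc assms by (intro adj_ext_fixed_outside) auto
  then have fix2: "cj (inv (t (?m + 1))) (adj_ext B i d) = adj_ext B i d"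
    using Suc V by (intro cj_inv_fixed) auto
  have "cj (t (?m + 1)) (cj (t (?m + 1)) (cj (t ?m) (adj_ext B i d))) =
    cj (t ?m) (cj (t (?m + 1)) (cj (t ?m) (cj (t ?m) (cj (inv (t (?m + 1))) (adj_ext B i d)))))"
    using Suc assms V by (intro cj_t_succ_sq_t) auto
  also have "\<dots> = cj (t ?m) (adj_ext B i d)" using fix1 fix2 Suc by simp
  finally show ?case by (simp add: add.commute add.left_commute)
qed

lemma adj_ext_fixed_inside:
  assumes "adj_family B" "1 \<le> i" "i + d + 1 \<le> n" "i + 1 \<le> k" "k + 2 \<le> i + d + 1"
  shows "cj (t k) (adj_ext B i d) = adj_ext B i d"
  using assms(3,5)
proof (induction d)
  case (Suc d)
  let ?m = "i + d + 1"
  have V: "adj_ext B i d \<in> carrier G" using Suc assms by (intro adj_ext_closed) auto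
  show ?case
  proof (cases "k + 2 \<le> ?m")
    case True
    have "cj (t k) (cj (t ?m) (adj_ext B i d)) = cj (t ?m) (cj (t k) (adj_ext B i d))"
      using Suc assms True V by (intro cj_t_commute_far) auto
    also have "\<dots> = cj (t ?m) (adj_ext B i d)" using Suc True by simp
    finally show ?thesis by simp
  next
    case False
    then have k: "k = i + d" using Suc by simp
    then obtain d' where d: "d = Suc d'" using assms by (cases d) auto
    have "adj_ext B i d' \<in> carrier G" using Suc assms d by (intro adj_ext_closed) auto
    then have "cj (t k) (cj (t (k + 1)) (cj (t k) (adj_ext B i d'))) =
        cj (t (k + 1)) (cj (t k) (cj (t (k + 1)) (adj_ext B i d')))"
      using Suc assms k d by (intro cj_t_braid) auto
    also have "cj (t (k + 1)) (adj_ext B i d') = adj_ext B i d'"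
      using Suc assms d k by (intro adj_ext_fixed_outside) auto
    finally show ?thesis using k d by simp
  qed
qed (use assms in simp)

lemma cj_t_adj_ext_Suc: assumes "adj_family B" "1 \<le> i" "i + d + 2 \<le> n"
  shows "cj (t (i + d + 1)) (adj_ext B i (Suc d)) = adj_ext B i d"
  using cj_t_sq_adj_ext[OF assms(1,2), of d] assms by simp

lemma cj_t_adj_ext_shrink: assumes "adj_family B" "1 \<le> i" "i + d + 2 \<le> n"
  shows "cj (t i) (adj_ext B i (Suc d)) = adj_ext B (i + 1) d"
  using assms(3)
proof (induction d)
  case 0
  then show ?case using adj_family_shift[OF assms(1,2)] by simp
next
  case (Suc d)
  let ?m = "i + d + 2"
  have V: "adj_ext B i (Suc d) \<in> carrier G" using Suc assms by (intro adj_ext_closed) auto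
  have "cj (t i) (cj (t ?m) (adj_ext B i (Suc d))) = cj (t ?m) (cj (t i) (adj_ext B i (Suc d)))"
    using Suc assms V by (intro cj_t_commute_far) auto
  also have "\<dots> = cj (t ?m) (adj_ext B (i + 1) d)" using Suc by simp
  finally show ?case by (simp add: add.commute add.left_commute)
qed

lemma cj_t_adj_ext_grow: assumes "adj_family B" "1 \<le> i" "i + d + 2 \<le> n"
  shows "cj (t i) (adj_ext B (i + 1) d) = adj_ext B i (Suc d)"
  using assms(3)
proof (induction d)
  case 0
  then show ?case using adj_family_succ[OF assms(1,2)] by simp
next
  case (Suc d)
  let ?m = "i + d + 2"
  have V: "adj_ext B (i + 1) d \<in> carrier G" using Suc assms by (intro adj_ext_closed) auto
  have "cj (t i) (cj (t ?m) (adj_ext B (i + 1) d)) = cj (t ?m) (cj (t i) (adj_ext B (i + 1) d))"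
    using Suc assms V by (intro cj_t_commute_far) auto
  also have "\<dots> = cj (t ?m) (adj_ext B i (Suc d))" using Suc by simp
  finally show ?case by (simp add: add.commute add.left_commute)
qed

text \<open>The one pair excluded here is \<open>(k, k+1)\<close>, which \<open>(k k+1)\<close> turns into \<open>(k+1, k)\<close>.\<close>

lemma cj_t_adj_ext:
  assumes "adj_family B" "1 \<le> lo" "lo < hi" "hi \<le> n" "1 \<le> k" "k \<le> n - 1"
    "\<not> (k = lo \<and> hi = lo + 1)"
  shows "adj_swap k lo < adj_swap k hi \<and>
    cj (t k) (adj_ext B lo (hi - lo - 1)) = adj_ext B (adj_swap k lo) (adj_swap k hi - adj_swap k lo - 1)"
proof -
  define d where "d = hi - lo - 1"
  have hi: "hi = lo + d + 1" and dd: "hi - lo - 1 = d" using assms d_def by auto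
  consider "k + 2 \<le> lo \<or> k > hi" | "k + 1 = lo" | "k = lo" "hi \<ge> lo + 2" | "lo < k" "k + 2 \<le> hi"
    | "k + 1 = hi" "k > lo" | "k = hi"
    using assms by linarith
  then show ?thesis
  proof cases
    case 1
    then have s: "adj_swap k lo = lo" "adj_swap k hi = hi" using assms by (auto simp: Transposition.transpose_def)
    have "cj (t k) (adj_ext B lo d) = adj_ext B lo d" using 1 assms hi by (intro adj_ext_fixed_outside) auto
    then show ?thesis using s dd assms by simp
  next
    case 2
    then have s: "adj_swap k lo = k" "adj_swap k hi = hi" using assms by (auto simp: Transposition.transpose_def)
    have "cj (t k) (adj_ext B (k + 1) d) = adj_ext B k (Suc d)" using 2 assms hi by (intro cj_t_adj_ext_grow) auto
    moreover have "hi - k - 1 = Suc d" using 2 hi by simp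
    ultimately show ?thesis using s dd assms 2 by simp
  next
    case 3
    then obtain d' where d': "d = Suc d'" using hi by (cases d) auto
    have s: "adj_swap k lo = lo + 1" "adj_swap k hi = hi" using 3 assms by (auto simp: Transposition.transpose_def)
    have "cj (t lo) (adj_ext B lo (Suc d')) = adj_ext B (lo + 1) d'"
      using 3 assms hi d' by (intro cj_t_adj_ext_shrink) auto
    moreover have "hi - (lo + 1) - 1 = d'" using hi d' by simp
    ultimately show ?thesis using s dd assms 3 d' by simp
  next
    case 4
    then have s: "adj_swap k lo = lo" "adj_swap k hi = hi" using assms by (auto simp: Transposition.transpose_def)
    have "cj (t k) (adj_ext B lo d) = adj_ext B lo d" using 4 assms hi by (intro adj_ext_fixed_inside) auto
    then show ?thesis using s dd assms by simp
  next
    case 5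
    then obtain d' where d': "d = Suc d'" using hi by (cases d) auto
    have s: "adj_swap k lo = lo" "adj_swap k hi = k" using 5 assms by (auto simp: Transposition.transpose_def)
    have "cj (t (lo + d' + 1)) (adj_ext B lo (Suc d')) = adj_ext B lo d'"
      using 5 assms hi d' by (intro cj_t_adj_ext_Suc) auto
    moreover have "lo + d' + 1 = k" "k - lo - 1 = d'" using 5 hi d' by auto
    ultimately show ?thesis using s dd assms 5 d' by simp
  next
    case 6
    then have s: "adj_swap k lo = lo" "adj_swap k hi = hi + 1" using assms by (auto simp: Transposition.transpose_def)
    moreover have "hi + 1 - lo - 1 = Suc d" using hi by simp
    ultimately show ?thesis using dd assms 6 hi by simp
  qed
qed

text \<open>The candidate preimage of \<open>x\<^sub>i\<^sub>j\<^sup>a\<close>.\<close>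

definition x_root :: "'a \<Rightarrow> nat \<Rightarrow> nat \<Rightarrow> 'g" where
  "x_root a i j =
     (if i < j then adj_ext (\<lambda>m. X m a) i (j - i - 1) else adj_ext (\<lambda>m. Z m a) j (i - j - 1))"

lemma x_root_closed:
  "1 \<le> i \<Longrightarrow> i \<le> n \<Longrightarrow> 1 \<le> j \<Longrightarrow> j \<le> n \<Longrightarrow> i \<noteq> j \<Longrightarrow> x_root a i j \<in> carrier G"
  unfolding x_root_def using adj_ext_closed[OF adj_family_X] adj_ext_closed[OF adj_family_Z] by auto

lemma cj_t_x_root: assumes "1 \<le> k" "k \<le> n - 1" "1 \<le> i" "i \<le> n" "1 \<le> j" "j \<le> n" "i \<noteq> j"
  shows "cj (t k) (x_root a i j) = x_root a (adj_swap k i) (adj_swap k j)"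
proof (cases "i < j")
  case True
  show ?thesis
  proof (cases "k = i \<and> j = i + 1")
    case True
    then show ?thesis using assms by (simp add: x_root_def Z_def)
  next
    case False
    then show ?thesis
      using cj_t_adj_ext[OF adj_family_X, of i j k a] assms \<open>i < j\<close> by (simp add: x_root_def)
  qed
next
  case False
  then have "j < i" using assms by simp
  show ?thesis
  proof (cases "k = j \<and> i = j + 1")
    case True
    then show ?thesis using assms cj_t_sq_X[of j a] by (simp add: x_root_def Z_def)
  next
    case False
    then show ?thesis
      using cj_t_adj_ext[OF adj_family_Z, of j i k a] assms \<open>j < i\<close> by (simp add: x_root_def)
  qed
qed

lemma cj_inv_t_x_root: assumes "1 \<le> k" "k \<le> n - 1" "1 \<le> i" "i \<le> n" "1 \<le> j" "j \<le> n" "i \<noteq> j"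
  shows "cj (inv (t k)) (x_root a i j) = x_root a (adj_swap k i) (adj_swap k j)"
proof -
  have \<sigma>: "adj_swap k permutes {1..n}" using adj_swap_permutes[OF assms(1,2)] .
  have r: "1 \<le> adj_swap k i" "adj_swap k i \<le> n" "1 \<le> adj_swap k j" "adj_swap k j \<le> n"
      "adj_swap k i \<noteq> adj_swap k j"
    using permutes_interval_apply[OF \<sigma>, of i] permutes_interval_apply[OF \<sigma>, of j]
      inj_eq[OF permutes_inj[OF \<sigma>], of i j] assms(3-7) by blast+
  have "x_root a i j = cj (t k) (x_root a (adj_swap k i) (adj_swap k j))"
    using cj_t_x_root[OF assms(1,2) r] by simp
  then show ?thesis using x_root_closed[OF r] assms by simp
qed

definition t_word :: "nat word \<Rightarrow> 'g" where
  "t_word w = word_eval G t w"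

lemma t_image: "t ` br_gens n \<subseteq> carrier G"
  by (auto simp: br_gens_def)

lemma t_word_closed: "w \<in> lists (br_gens n \<times> UNIV) \<Longrightarrow> t_word w \<in> carrier G"
  unfolding t_word_def by (rule word_eval_closed[OF is_group t_image])

lemma cj_t_word_x_root:
  assumes "w \<in> lists (br_gens n \<times> UNIV)" "1 \<le> i" "i \<le> n" "1 \<le> j" "j \<le> n" "i \<noteq> j"
  shows "cj (t_word w) (x_root a i j) = x_root a (perm_of_word w i) (perm_of_word w j)"
  using assms(1)
proof (induction w)
  case Nil
  then show ?case using assms x_root_closed by (simp add: t_word_def)
next
  case (Cons x w)
  then obtain k b where x: "x = (k, b)" "1 \<le> k" "k \<le> n - 1" "w \<in> lists (br_gens n \<times> UNIV)"
    by (auto simp: br_gens_def)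
  have \<sigma>: "perm_of_word w permutes {1..n}" using perm_of_word_permutes x(4) .
  have r: "1 \<le> perm_of_word w i" "perm_of_word w i \<le> n" "1 \<le> perm_of_word w j"
      "perm_of_word w j \<le> n" "perm_of_word w i \<noteq> perm_of_word w j"
    using permutes_interval_apply[OF \<sigma>, of i] permutes_interval_apply[OF \<sigma>, of j]
      inj_eq[OF permutes_inj[OF \<sigma>], of i j] assms(2-6) by blast+
  have "t_word ((k, b) # w) = (if b then t k else inv (t k)) \<otimes> t_word w" by (simp add: t_word_def)
  then show ?case
    using x t_word_closed[OF x(4)] Cons.IH cj_t_x_root[OF x(2,3) r] cj_inv_t_x_root[OF x(2,3) r]
      x_root_closed assms
    by (simp add: cj_mult_left)
qed

lemma x_root_transport:
  assumes "distinct xs" "set xs \<subseteq> {1..n}"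
  obtains w where "w \<in> lists (br_gens n \<times> UNIV)"
    "\<And>p q a. p < length xs \<Longrightarrow> q < length xs \<Longrightarrow> p \<noteq> q \<Longrightarrow>
       x_root a (xs ! p) (xs ! q) = cj (t_word w) (x_root a (Suc p) (Suc q))"
proof -
  obtain w where w: "w \<in> lists (br_gens n \<times> UNIV)" "\<forall>p < length xs. perm_of_word w (p + 1) = xs ! p"
    using braid_word_realizes[OF assms] by blast
  have "length xs \<le> n"
    using card_mono[of "{1..n}" "set xs"] distinct_card[of xs] assms by auto
  then show ?thesis using w by (intro that[OF w(1)]) (simp add: cj_t_word_x_root)
qed

lemma x_root_12: "x_root a (Suc 0) (Suc (Suc 0)) = X (Suc 0) a"
  by (simp add: x_root_def)

lemma x_root_23: "x_root a (Suc (Suc 0)) (Suc (Suc (Suc 0))) = X (Suc (Suc 0)) a"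
  by (simp add: x_root_def)

lemma x_root_13: "x_root a (Suc 0) (Suc (Suc (Suc 0))) = cj (t (Suc (Suc 0))) (X (Suc 0) a)"
  by (simp add: x_root_def)

lemma x_root_34: "x_root a (Suc (Suc (Suc 0))) (Suc (Suc (Suc (Suc 0)))) = X (Suc (Suc (Suc 0))) a"
  by (simp add: x_root_def)

lemma x_root_add: assumes "1 \<le> i" "i \<le> n" "1 \<le> j" "j \<le> n" "i \<noteq> j"
  shows "x_root a i j \<otimes> x_root b i j = x_root (a + b) i j"
proof -
  have d: "distinct [i, j]" "set [i, j] \<subseteq> {1..n}" using assms by auto
  obtain w where w: "w \<in> lists (br_gens n \<times> UNIV)"
    "\<And>p q a. p < length [i, j] \<Longrightarrow> q < length [i, j] \<Longrightarrow> p \<noteq> q \<Longrightarrow>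
       x_root a ([i, j] ! p) ([i, j] ! q) = cj (t_word w) (x_root a (Suc p) (Suc q))"
    using x_root_transport[OF d] by blast
  have n: "2 \<le> n" using assms by auto
  have "\<And>a. x_root a i j = cj (t_word w) (X 1 a)" using w(2)[of 0 1] x_root_12 by simp
  then show ?thesis using t_word_closed[OF w(1)] X_add[of 1 a b] n by (simp add: cj_mult_right[symmetric])
qed

lemma x_root_commute_same_row:
  assumes "distinct [i, j, l]" "set [i, j, l] \<subseteq> {1..n}"
  shows "x_root a i j \<otimes> x_root b i l = x_root b i l \<otimes> x_root a i j"
proof -
  obtain w where w: "w \<in> lists (br_gens n \<times> UNIV)"
    "\<And>p q a. p < length [i, j, l] \<Longrightarrow> q < length [i, j, l] \<Longrightarrow> p \<noteq> q \<Longrightarrow>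
       x_root a ([i, j, l] ! p) ([i, j, l] ! q) = cj (t_word w) (x_root a (Suc p) (Suc q))"
    using x_root_transport[OF assms] by blast
  have n: "3 \<le> n" using distinct_card[OF assms(1)] card_mono[OF _ assms(2)] by fastforce
  have "x_root a i j = cj (t_word w) (X 1 a)" using w(2)[of 0 1 a] x_root_12 by simp
  moreover have "x_root b i l = cj (t_word w) (cj (t 2) (X 1 b))"
    using w(2)[of 0 2 b] x_root_13 by (simp add: numeral_eq_Suc)
  moreover have "X 1 a \<otimes> cj (t (1 + 1)) (X 1 b) \<otimes> X (1 + 1) 0 =
      X (1 + 1) 0 \<otimes> cj (t (1 + 1)) (X 1 (b + a * 0)) \<otimes> X 1 a"
    using n by (intro X_A2) auto
  then have "X 1 a \<otimes> cj (t 2) (X 1 b) = cj (t 2) (X 1 b) \<otimes> X 1 a"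
    using n by (simp add: numeral_eq_Suc)
  ultimately show ?thesis using n t_word_closed[OF w(1)] by (simp add: cj_preserves_commute)
qed

lemma x_root_commute_same_column:
  assumes "distinct [i, k, j]" "set [i, k, j] \<subseteq> {1..n}"
  shows "x_root a i j \<otimes> x_root b k j = x_root b k j \<otimes> x_root a i j"
proof -
  obtain w where w: "w \<in> lists (br_gens n \<times> UNIV)"
    "\<And>p q a. p < length [i, k, j] \<Longrightarrow> q < length [i, k, j] \<Longrightarrow> p \<noteq> q \<Longrightarrow>
       x_root a ([i, k, j] ! p) ([i, k, j] ! q) = cj (t_word w) (x_root a (Suc p) (Suc q))"
    using x_root_transport[OF assms] by blast
  have n: "3 \<le> n" using distinct_card[OF assms(1)] card_mono[OF _ assms(2)] by fastforce
  have "x_root a i j = cj (t_word w) (cj (t 2) (X 1 a))"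
    using w(2)[of 0 2 a] x_root_13 by (simp add: numeral_eq_Suc)
  moreover have "x_root b k j = cj (t_word w) (X 2 b)"
    using w(2)[of 1 2 b] x_root_23 by (simp add: numeral_eq_Suc)
  moreover have "X 1 0 \<otimes> cj (t (1 + 1)) (X 1 a) \<otimes> X (1 + 1) b =
      X (1 + 1) b \<otimes> cj (t (1 + 1)) (X 1 (a + 0 * b)) \<otimes> X 1 0"
    using n by (intro X_A2) auto
  then have "cj (t 2) (X 1 a) \<otimes> X 2 b = X 2 b \<otimes> cj (t 2) (X 1 a)"
    using n by (simp add: numeral_eq_Suc)
  ultimately show ?thesis using n t_word_closed[OF w(1)] by (simp add: cj_preserves_commute)
qed

lemma x_root_commute_disjoint:
  assumes "distinct [i, j, k, l]" "set [i, j, k, l] \<subseteq> {1..n}"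
  shows "x_root a i j \<otimes> x_root b k l = x_root b k l \<otimes> x_root a i j"
proof -
  obtain w where w: "w \<in> lists (br_gens n \<times> UNIV)"
    "\<And>p q a. p < length [i, j, k, l] \<Longrightarrow> q < length [i, j, k, l] \<Longrightarrow> p \<noteq> q \<Longrightarrow>
       x_root a ([i, j, k, l] ! p) ([i, j, k, l] ! q) = cj (t_word w) (x_root a (Suc p) (Suc q))"
    using x_root_transport[OF assms] by blast
  have n: "4 \<le> n" using distinct_card[OF assms(1)] card_mono[OF _ assms(2)] by fastforce
  have "x_root a i j = cj (t_word w) (X 1 a)" using w(2)[of 0 1 a] x_root_12 by simp
  moreover have "x_root b k l = cj (t_word w) (X 3 b)"
    using w(2)[of 2 3 b] x_root_34 by (simp add: numeral_eq_Suc)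
  moreover have "X 1 a \<otimes> X 3 b = X 3 b \<otimes> X 1 a" using n by (intro X_commute_far) auto
  ultimately show ?thesis using n t_word_closed[OF w(1)] by (simp add: cj_preserves_commute)
qed

lemma x_root_commute:
  assumes "(i, j, a) \<in> st_gens n" "(k, l, b) \<in> st_gens n" "i \<noteq> l" "j \<noteq> k"
  shows "x_root a i j \<otimes> x_root b k l = x_root b k l \<otimes> x_root a i j"
proof -
  consider "i = k" "j = l" | "i = k" "j \<noteq> l" | "i \<noteq> k" "j = l" | "i \<noteq> k" "j \<noteq> l" by blast
  then show ?thesis
  proof cases
    case 1
    then show ?thesis using assms x_root_add[of i j] by (simp add: st_gens_def add.commute)
  next
    case 2
    then show ?thesis using assms x_root_commute_same_row[of i j l] by (auto simp: st_gens_def)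
  next
    case 3
    then show ?thesis using assms x_root_commute_same_column[of i k j] by (auto simp: st_gens_def)
  next
    case 4
    then show ?thesis using assms x_root_commute_disjoint[of i j k l] by (auto simp: st_gens_def)
  qed
qed

lemma x_root_commutator:
  assumes "distinct [i, j, k]" "set [i, j, k] \<subseteq> {1..n}"
  shows "x_root a i j \<otimes> x_root b j k = x_root b j k \<otimes> x_root (a * b) i k \<otimes> x_root a i j"
proof -
  obtain w where w: "w \<in> lists (br_gens n \<times> UNIV)"
    "\<And>p q a. p < length [i, j, k] \<Longrightarrow> q < length [i, j, k] \<Longrightarrow> p \<noteq> q \<Longrightarrow>
       x_root a ([i, j, k] ! p) ([i, j, k] ! q) = cj (t_word w) (x_root a (Suc p) (Suc q))"
    using x_root_transport[OF assms] by blast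
  have n: "3 \<le> n" using distinct_card[OF assms(1)] card_mono[OF _ assms(2)] by fastforce
  have c: "t_word w \<in> carrier G" using t_word_closed[OF w(1)] .
  have "X 1 a \<otimes> cj (t (1 + 1)) (X 1 0) \<otimes> X (1 + 1) b =
      X (1 + 1) b \<otimes> cj (t (1 + 1)) (X 1 (0 + a * b)) \<otimes> X 1 a"
    using n by (intro X_A2) auto
  then have "X 1 a \<otimes> X 2 b = X 2 b \<otimes> cj (t 2) (X 1 (a * b)) \<otimes> X 1 a"
    using n by (simp add: numeral_eq_Suc)
  then have "cj (t_word w) (X 1 a) \<otimes> cj (t_word w) (X 2 b) =
      cj (t_word w) (X 2 b) \<otimes> cj (t_word w) (cj (t 2) (X 1 (a * b))) \<otimes> cj (t_word w) (X 1 a)"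
    using c n by (simp add: cj_mult_right[symmetric])
  moreover have "x_root a i j = cj (t_word w) (X 1 a)" using w(2)[of 0 1 a] x_root_12 by simp
  moreover have "x_root b j k = cj (t_word w) (X 2 b)"
    using w(2)[of 1 2 b] x_root_23 by (simp add: numeral_eq_Suc)
  moreover have "x_root (a * b) i k = cj (t_word w) (cj (t 2) (X 1 (a * b)))"
    using w(2)[of 0 2 "a * b"] x_root_13 by (simp add: numeral_eq_Suc)
  ultimately show ?thesis by simp
qed

lemma relations_hold_x_root: "relations_hold G (\<lambda>(i, j, a). x_root a i j) (st_gens n) (st_rels n)"
  unfolding relations_hold_def
proof (clarify)
  fix u v :: "(nat \<times> nat \<times> 'a) word"
  assume "(u, v) \<in> st_rels n"
  then consider
      (add) i j a b where "u = [((i, j, a), True), ((i, j, b), True)]" "v = [((i, j, a + b), True)]"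
        "(i, j, a) \<in> st_gens n"
    | (comm) i j k l a b where "u = [((i, j, a), True), ((k, l, b), True)]"
        "v = [((k, l, b), True), ((i, j, a), True)]"
        "(i, j, a) \<in> st_gens n" "(k, l, b) \<in> st_gens n" "i \<noteq> l" "j \<noteq> k"
    | (commutator) i j k a b where "u = [((i, j, a), True), ((j, k, b), True)]"
        "v = [((j, k, b), True), ((i, k, a * b), True), ((i, j, a), True)]"
        "(i, j, a) \<in> st_gens n" "(j, k, b) \<in> st_gens n" "i \<noteq> k"
    unfolding st_rels_def by blast
  then show "word_eval G (\<lambda>(i, j, a). x_root a i j) u = word_eval G (\<lambda>(i, j, a). x_root a i j) v"
  proof cases
    case add
    then show ?thesis using x_root_add[of i j a b] x_root_closed[of i j] by (auto simp: st_gens_def)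
  next
    case comm
    then show ?thesis using x_root_commute[OF comm(3-6)] x_root_closed[of i j] x_root_closed[of k l]
      by (auto simp: st_gens_def)
  next
    case commutator
    then show ?thesis using x_root_commutator[of i j k a b] x_root_closed[of i j] x_root_closed[of j k]
        x_root_closed[of i k "a * b"]
      by (auto simp: st_gens_def m_assoc)
  qed
qed

lemma relations_hold_t: "relations_hold G t (br_gens n) (br_rels n)"
  unfolding relations_hold_def
proof (clarify)
  fix u v assume "(u, v) \<in> br_rels n"
  then consider (far) i j where "u = [(i, True), (j, True)]" "v = [(j, True), (i, True)]"
      "1 \<le> i" "i \<le> n - 1" "1 \<le> j" "j \<le> n - 1" "i + 2 \<le> j \<or> j + 2 \<le> i"
    | (adj) i where "u = [(i, True), (i + 1, True), (i, True)]"
      "v = [(i + 1, True), (i, True), (i + 1, True)]" "1 \<le> i" "i + 1 \<le> n - 1"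
    unfolding br_rels_def by blast
  then show "word_eval G t u = word_eval G t v"
  proof cases
    case far
    then show ?thesis using t_commute_far[of i j] by simp
  next
    case adj
    then show ?thesis using t_braid[of i] by (simp add: m_assoc)
  qed
qed

text \<open>The candidate inverse of \<open>\<phi>\<close>.\<close>

definition psi_St :: "(nat \<times> nat \<times> 'a) word set \<Rightarrow> 'g" where
  "psi_St = pres_lift G (\<lambda>(i, j, a). x_root a i j)"

definition psi_Br :: "nat word set \<Rightarrow> 'g" where
  "psi_Br = pres_lift G t"

definition psi :: "(nat \<times> nat \<times> 'a) word set \<times> nat word set \<Rightarrow> 'g" where
  "psi h = psi_St (fst h) \<otimes> psi_Br (snd h)"

lemma x_root_image: "(\<lambda>(i, j, a). x_root a i j) ` st_gens n \<subseteq> carrier G"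
  by (auto simp: st_gens_def intro!: x_root_closed)

lemma psi_St_hom: "psi_St \<in> hom (St n) G"
  unfolding psi_St_def St_def by (rule pres_lift_hom[OF is_group x_root_image relations_hold_x_root])

lemma psi_Br_hom: "psi_Br \<in> hom (Br n) G"
  unfolding psi_Br_def Br_def by (rule pres_lift_hom[OF is_group t_image relations_hold_t])

lemma psi_St_word_class:
  "w \<in> lists (st_gens n \<times> UNIV) \<Longrightarrow> psi_St (st_class n w) = word_eval G (\<lambda>(i, j, a). x_root a i j) w"
  unfolding psi_St_def by (rule pres_lift_word_class[OF is_group x_root_image relations_hold_x_root])

lemma psi_Br_word_class: "w \<in> lists (br_gens n \<times> UNIV) \<Longrightarrow> psi_Br (br_class n w) = t_word w"
  unfolding psi_Br_def t_word_def by (rule pres_lift_word_class[OF is_group t_image relations_hold_t])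

lemma psi_St_st_act:
  assumes "s \<in> carrier (St n)" "b \<in> carrier (Br n)"
  shows "psi_St (st_act n (perm_of_braid b) s) = cj (psi_Br b) (psi_St s)"
proof -
  obtain u where u: "u \<in> lists (st_gens n \<times> UNIV)" "s = st_class n u" using assms(1) by (rule St_carrierE)
  obtain v where v: "v \<in> lists (br_gens n \<times> UNIV)" "b = br_class n v" using assms(2) by (rule Br_carrierE)
  let ?\<sigma> = "perm_of_word v"
  have \<sigma>: "?\<sigma> permutes {1..n}" using perm_of_word_permutes[OF v(1)] .
  have "psi_St (st_act n (perm_of_braid b) s) = psi_St (st_class n (relabel ?\<sigma> u))"
    using u v \<sigma> by (simp add: perm_of_braid_word_class st_act_word_class)
  also have "\<dots> = word_eval G (\<lambda>(i, j, a). x_root a (?\<sigma> i) (?\<sigma> j)) u"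
    using relabel_in_lists[OF \<sigma> u(1)] by (simp add: psi_St_word_class word_eval_relabel case_prod_beta)
  also have "\<dots> = word_eval G (cj (t_word v) \<circ> (\<lambda>(i, j, a). x_root a i j)) u"
    using u(1) by (intro word_eval_cong) (auto simp: st_gens_def cj_t_word_x_root[OF v(1)])
  also have "\<dots> = cj (t_word v) (word_eval G (\<lambda>(i, j, a). x_root a i j) u)"
    using hom_word_eval[OF is_group is_group cj_hom[OF t_word_closed[OF v(1)]] x_root_image u(1)] by simp
  also have "\<dots> = cj (psi_Br b) (psi_St s)" using u v by (simp add: psi_St_word_class psi_Br_word_class)
  finally show ?thesis .
qed

lemma psi_hom: "psi \<in> hom (StBr n) G"
proof (rule homI)
  fix h :: "(nat \<times> nat \<times> 'a) word set \<times> nat word set" assume "h \<in> carrier (StBr n)"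
  then show "psi h \<in> carrier G"
    using hom_in_carrier[OF psi_St_hom] hom_in_carrier[OF psi_Br_hom] by (auto simp: psi_def StBr_carrier)
next
  fix h h' :: "(nat \<times> nat \<times> 'a) word set \<times> nat word set"
  assume "h \<in> carrier (StBr n)" "h' \<in> carrier (StBr n)"
  then obtain s b s' b' where sb: "h = (s, b)" "s \<in> carrier (St n)" "b \<in> carrier (Br n)"
    and sb': "h' = (s', b')" "s' \<in> carrier (St n)" "b' \<in> carrier (Br n)"
    by (auto simp: StBr_carrier)
  have c: "psi_St s \<in> carrier G" "psi_St s' \<in> carrier G" "psi_Br b \<in> carrier G" "psi_Br b' \<in> carrier G"
    using sb sb' hom_in_carrier[OF psi_St_hom] hom_in_carrier[OF psi_Br_hom] by auto
  have "psi (h \<otimes>\<^bsub>StBr n\<^esub> h') =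
      psi_St (s \<otimes>\<^bsub>St n\<^esub> st_act n (perm_of_braid b) s') \<otimes> psi_Br (b \<otimes>\<^bsub>Br n\<^esub> b')"
    using sb sb' by (simp add: psi_def StBr_mult)
  also have "\<dots> = psi_St s \<otimes> cj (psi_Br b) (psi_St s') \<otimes> (psi_Br b \<otimes> psi_Br b')"
    using sb sb' st_act_closed[OF perm_of_braid_permutes[OF sb(3)] sb'(2)]
      hom_mult[OF psi_St_hom] hom_mult[OF psi_Br_hom] psi_St_st_act by simp
  also have "\<dots> = psi h \<otimes> psi h'"
    using c sb sb' by (simp add: psi_def cj_def m_assoc)
  finally show "psi (h \<otimes>\<^bsub>StBr n\<^esub> h') = psi h \<otimes> psi h'" .
qed

end

section \<open>Generators of \<open>St\<^sub>n(A)\<close> and \<open>Br\<^sub>n\<close>\<close>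

abbreviation st_gen :: "nat \<Rightarrow> nat \<Rightarrow> nat \<Rightarrow> 'a::ring \<Rightarrow> (nat \<times> nat \<times> 'a) word set" where
  "st_gen n i j a \<equiv> st_class n [((i, j, a), True)]"

abbreviation br_gen :: "nat \<Rightarrow> nat \<Rightarrow> nat word set" where
  "br_gen n i \<equiv> br_class n [(i, True)]"

lemma st_gen_in_carrier: "1 \<le> i \<Longrightarrow> i \<le> n \<Longrightarrow> 1 \<le> j \<Longrightarrow> j \<le> n \<Longrightarrow> i \<noteq> j \<Longrightarrow>
    (st_gen n i j a :: (nat \<times> nat \<times> 'a::ring) word set) \<in> carrier (St n)"
  unfolding St_def by (rule word_class_in_carrier) (auto simp: st_gens_def)

lemma br_gen_in_carrier: "1 \<le> i \<Longrightarrow> i \<le> n - 1 \<Longrightarrow> br_gen n i \<in> carrier (Br n)"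
  unfolding Br_def by (rule word_class_in_carrier) (auto simp: br_gens_def)

lemma perm_of_braid_br_gen: "1 \<le> i \<Longrightarrow> i \<le> n - 1 \<Longrightarrow> perm_of_braid (br_gen n i) = adj_swap i"
  by (subst perm_of_braid_word_class) (auto simp: br_gens_def)

lemma st_act_st_gen:
  "\<sigma> permutes {1..n} \<Longrightarrow> (i, j, a) \<in> st_gens n \<Longrightarrow> st_act n \<sigma> (st_gen n i j a) = st_gen n (\<sigma> i) (\<sigma> j) a"
  by (subst st_act_word_class) auto

lemma st_gen_add: assumes "1 \<le> i" "i \<le> n" "1 \<le> j" "j \<le> n" "i \<noteq> j"
  shows "st_gen n i j a \<otimes>\<^bsub>St n\<^esub> st_gen n i j b = (st_gen n i j (a + b) :: (nat \<times> nat \<times> 'a::ring) word set)"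
proof -
  have r: "([((i, j, a), True), ((i, j, b), True)], [((i, j, a + b), True)]) \<in> st_rels n"
    using assms unfolding st_rels_def st_gens_def by blast
  show ?thesis unfolding St_def using assms
    by (subst mult_word_class) (auto simp: st_gens_def intro!: word_class_eqI pres_eq.rel[OF r])
qed

lemma st_gen_zero: assumes "1 \<le> i" "i \<le> n" "1 \<le> j" "j \<le> n" "i \<noteq> j"
  shows "st_gen n i j 0 = (\<one>\<^bsub>St n\<^esub> :: (nat \<times> nat \<times> 'a::ring) word set)"
proof -
  interpret S: group "St n :: (nat \<times> nat \<times> 'a) word set monoid" by (rule group_St)
  have "st_gen n i j 0 \<otimes>\<^bsub>St n\<^esub> st_gen n i j 0 = (st_gen n i j 0 :: (nat \<times> nat \<times> 'a) word set)"
    using st_gen_add[OF assms, of 0 0] by simp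
  then show ?thesis
    using S.l_cancel_one[OF st_gen_in_carrier[OF assms, of 0] st_gen_in_carrier[OF assms, of 0]] by simp
qed

lemma st_gen_commute:
  assumes "(i, j, a) \<in> st_gens n" "(k, l, b) \<in> st_gens n" "i \<noteq> l" "j \<noteq> k"
  shows "st_gen n i j a \<otimes>\<^bsub>St n\<^esub> st_gen n k l b =
    (st_gen n k l b \<otimes>\<^bsub>St n\<^esub> st_gen n i j a :: (nat \<times> nat \<times> 'a::ring) word set)"
proof -
  have r: "([((i, j, a), True), ((k, l, b), True)], [((k, l, b), True), ((i, j, a), True)]) \<in> st_rels n"
    using assms unfolding st_rels_def by blast
  show ?thesis unfolding St_def using assms
    by (simp add: mult_word_class) (auto intro!: word_class_eqI pres_eq.rel[OF r])
qed

lemma st_gen_commutator: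
  assumes "(i, j, a) \<in> st_gens n" "(j, k, b) \<in> st_gens n" "i \<noteq> k"
  shows "st_gen n i j a \<otimes>\<^bsub>St n\<^esub> st_gen n j k b =
    (st_gen n j k b \<otimes>\<^bsub>St n\<^esub> st_gen n i k (a * b) \<otimes>\<^bsub>St n\<^esub> st_gen n i j a :: (nat \<times> nat \<times> 'a::ring) word set)"
proof -
  have r: "([((i, j, a), True), ((j, k, b), True)],
      [((j, k, b), True), ((i, k, a * b), True), ((i, j, a), True)]) \<in> st_rels n"
    using assms unfolding st_rels_def by blast
  have "(i, k, a * b) \<in> st_gens n" using assms by (auto simp: st_gens_def)
  then show ?thesis unfolding St_def using assms
    by (simp add: mult_word_class) (auto intro!: word_class_eqI pres_eq.rel[OF r])
qed

text \<open>The Steinberg relation behind (A2).\<close>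

lemma st_gen_A2:
  assumes "distinct [i, j, k]" "set [i, j, k] \<subseteq> {1..n}"
  shows "st_gen n i j a \<otimes>\<^bsub>St n\<^esub> (st_gen n i k b \<otimes>\<^bsub>St n\<^esub> st_gen n j k c) =
    (st_gen n j k c \<otimes>\<^bsub>St n\<^esub> (st_gen n i k (b + a * c) \<otimes>\<^bsub>St n\<^esub> st_gen n i j a)
      :: (nat \<times> nat \<times> 'a::ring) word set)"
proof -
  interpret S: group "St n :: (nat \<times> nat \<times> 'a) word set monoid" by (rule group_St)
  have g: "(i, j, d) \<in> st_gens n" "(i, k, d) \<in> st_gens n" "(j, k, d) \<in> st_gens n" for d :: 'a
    using assms by (auto simp: st_gens_def)
  have c: "st_gen n i j d \<in> carrier (St n)" "st_gen n i k d \<in> carrier (St n)"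
    "st_gen n j k d \<in> carrier (St n)" for d :: 'a
    using assms by (auto intro: st_gen_in_carrier)
  have d: "i \<noteq> j" "i \<noteq> k" "j \<noteq> k" "j \<noteq> i" "k \<noteq> i" "k \<noteq> j" using assms(1) by auto
  have "st_gen n i j a \<otimes>\<^bsub>St n\<^esub> (st_gen n i k b \<otimes>\<^bsub>St n\<^esub> st_gen n j k c) =
      (st_gen n i j a \<otimes>\<^bsub>St n\<^esub> st_gen n j k c) \<otimes>\<^bsub>St n\<^esub> st_gen n i k b"
    using st_gen_commute[of i k b n j k c] g c d by (simp add: S.m_assoc)
  also have "\<dots> = st_gen n j k c \<otimes>\<^bsub>St n\<^esub> st_gen n i k (a * c) \<otimes>\<^bsub>St n\<^esub> (st_gen n i j a \<otimes>\<^bsub>St n\<^esub> st_gen n i k b)"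
    using st_gen_commutator[of i j a n k c] g c d by (simp add: S.m_assoc)
  also have "\<dots> = st_gen n j k c \<otimes>\<^bsub>St n\<^esub> (st_gen n i k (a * c) \<otimes>\<^bsub>St n\<^esub> st_gen n i k b) \<otimes>\<^bsub>St n\<^esub> st_gen n i j a"
    using st_gen_commute[of i j a n i k b] g c d by (simp add: S.m_assoc)
  also have "\<dots> = st_gen n j k c \<otimes>\<^bsub>St n\<^esub> (st_gen n i k (b + a * c) \<otimes>\<^bsub>St n\<^esub> st_gen n i j a)"
    using st_gen_add[of i n k, where a = "a * c" and b = b] assms c d by (simp add: S.m_assoc add.commute)
  finally show ?thesis .
qed

lemma br_gen_commute_far:
  assumes "1 \<le> i" "i \<le> n - 1" "1 \<le> j" "j \<le> n - 1" "i + 2 \<le> j \<or> j + 2 \<le> i"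
  shows "br_gen n i \<otimes>\<^bsub>Br n\<^esub> br_gen n j = br_gen n j \<otimes>\<^bsub>Br n\<^esub> br_gen n i"
proof -
  have r: "([(i, True), (j, True)], [(j, True), (i, True)]) \<in> br_rels n"
    using assms unfolding br_rels_def by blast
  have "i \<in> br_gens n" "j \<in> br_gens n" using assms by (auto simp: br_gens_def)
  then show ?thesis unfolding Br_def
    by (simp add: mult_word_class) (auto intro!: word_class_eqI pres_eq.rel[OF r])
qed

lemma br_gen_braid: assumes "1 \<le> i" "i + 1 \<le> n - 1"
  shows "br_gen n i \<otimes>\<^bsub>Br n\<^esub> (br_gen n (i + 1) \<otimes>\<^bsub>Br n\<^esub> br_gen n i) =
    br_gen n (i + 1) \<otimes>\<^bsub>Br n\<^esub> (br_gen n i \<otimes>\<^bsub>Br n\<^esub> br_gen n (i + 1))"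
proof -
  have r: "([(i, True), (i + 1, True), (i, True)], [(i + 1, True), (i, True), (i + 1, True)]) \<in> br_rels n"
    using assms unfolding br_rels_def by blast
  have "i \<in> br_gens n" "i + 1 \<in> br_gens n" using assms by (auto simp: br_gens_def)
  then show ?thesis unfolding Br_def using r
    by (simp add: mult_word_class) (auto intro!: word_class_eqI pres_eq.rel)
qed

section \<open>The map \<open>\<phi>\<close> is a well-defined homomorphism\<close>

lemma phi_gen_eq: assumes "1 \<le> i" "i \<le> n - 1"
  shows "phi_gen n (i, a) = (st_gen n i (i + 1) a :: (nat \<times> nat \<times> 'a::ring) word set, br_gen n i)"
proof -
  interpret S: group "St n :: (nat \<times> nat \<times> 'a) word set monoid" by (rule group_St)
  interpret B: group "Br n" by (rule group_Br)
  show ?thesis using assms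
    by (simp add: phi_gen_def StBr_mult perm_of_braid_one st_act_id st_gen_in_carrier br_gen_in_carrier)
qed

lemma phi_gen_in_carrier: assumes "1 \<le> i" "i \<le> n - 1"
  shows "phi_gen n (i, a) \<in> carrier (StBr n :: ((nat \<times> nat \<times> 'a::ring) word set \<times> nat word set) monoid)"
  using assms by (simp add: phi_gen_eq StBr_carrier st_gen_in_carrier br_gen_in_carrier)

lemma phi_gen_image:
  "phi_gen n ` brA_gens n \<subseteq> carrier (StBr n :: ((nat \<times> nat \<times> 'a::ring) word set \<times> nat word set) monoid)"
  using phi_gen_in_carrier by (auto simp: brA_gens_def)

lemma StBr_mult_br_gen: assumes "1 \<le> i" "i \<le> n - 1"
  shows "(s, br_gen n i) \<otimes>\<^bsub>StBr n\<^esub> (s' :: (nat \<times> nat \<times> 'a::ring) word set, b) =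
    (s \<otimes>\<^bsub>St n\<^esub> st_act n (adj_swap i) s', br_gen n i \<otimes>\<^bsub>Br n\<^esub> b)"
  using assms by (simp add: StBr_mult perm_of_braid_br_gen)

lemma word_eval_phi_gen2:
  fixes a b :: "'a::ring"
  assumes "1 \<le> i" "i \<le> n - 1" "1 \<le> j" "j \<le> n - 1"
  shows "word_eval (StBr n) (phi_gen n) [((i, a), True), ((j, b), True)] =
    (st_gen n i (i + 1) a \<otimes>\<^bsub>St n\<^esub> st_act n (adj_swap i) (st_gen n j (j + 1) b),
     br_gen n i \<otimes>\<^bsub>Br n\<^esub> br_gen n j)"
proof -
  interpret H: group "StBr n :: ((nat \<times> nat \<times> 'a) word set \<times> nat word set) monoid" by (rule group_StBr)
  show ?thesis using assms phi_gen_in_carrier[of j n b]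
    by (simp add: phi_gen_eq StBr_mult_br_gen)
qed

lemma word_eval_phi_gen3:
  fixes a b c :: "'a::ring"
  assumes "1 \<le> i" "i \<le> n - 1" "1 \<le> j" "j \<le> n - 1" "1 \<le> k" "k \<le> n - 1"
  shows "word_eval (StBr n) (phi_gen n) [((i, a), True), ((j, b), True), ((k, c), True)] =
    (st_gen n i (i + 1) a \<otimes>\<^bsub>St n\<^esub> (st_act n (adj_swap i) (st_gen n j (j + 1) b) \<otimes>\<^bsub>St n\<^esub>
       st_act n (adj_swap i \<circ> adj_swap j) (st_gen n k (k + 1) c)),
     br_gen n i \<otimes>\<^bsub>Br n\<^esub> (br_gen n j \<otimes>\<^bsub>Br n\<^esub> br_gen n k))"
proof -
  interpret H: group "StBr n :: ((nat \<times> nat \<times> 'a) word set \<times> nat word set) monoid" by (rule group_StBr)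
  have \<sigma>: "adj_swap i permutes {1..n}" "adj_swap j permutes {1..n}"
    using adj_swap_permutes[OF assms(1,2)] adj_swap_permutes[OF assms(3,4)] .
  show ?thesis using assms \<sigma> phi_gen_in_carrier[of k n c]
    by (simp add: phi_gen_eq StBr_mult_br_gen st_act_mult st_act_comp st_act_closed st_gen_in_carrier)
qed

lemma phi_gen_A1: assumes "1 \<le> i" "i \<le> n - 1"
  shows "word_eval (StBr n) (phi_gen n) [((i, a), True), ((i, 0), True), ((i, b), True)] =
    (word_eval (StBr n) (phi_gen n) [((i, 0), True), ((i, 0), True), ((i, a + b), True)]
      :: (nat \<times> nat \<times> 'a::ring) word set \<times> nat word set)"
proof -
  interpret S: group "St n :: (nat \<times> nat \<times> 'a) word set monoid" by (rule group_St)
  have ij: "1 \<le> i" "i \<le> n" "1 \<le> i + 1" "i + 1 \<le> n" "i \<noteq> i + 1" using assms by auto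
  have \<sigma>: "adj_swap i permutes {1..n}" using assms by (rule adj_swap_permutes)
  have "st_act n (adj_swap i) (st_gen n i (i + 1) 0) = (\<one>\<^bsub>St n\<^esub> :: (nat \<times> nat \<times> 'a) word set)"
    by (subst st_gen_zero[OF ij]) (rule st_act_one[OF \<sigma>])
  moreover have "st_gen n i (i + 1) 0 = (\<one>\<^bsub>St n\<^esub> :: (nat \<times> nat \<times> 'a) word set)"
    by (rule st_gen_zero[OF ij])
  moreover have "(st_gen n i (i + 1) d :: (nat \<times> nat \<times> 'a) word set) \<in> carrier (St n)" for d
    by (rule st_gen_in_carrier[OF ij])
  ultimately show ?thesis
    unfolding word_eval_phi_gen3[OF assms assms assms] using st_gen_add[OF ij] by (simp add: st_act_id)
qed

lemma phi_gen_A1xA1: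
  assumes "1 \<le> i" "i \<le> n - 1" "1 \<le> j" "j \<le> n - 1" "i + 2 \<le> j \<or> j + 2 \<le> i"
  shows "word_eval (StBr n) (phi_gen n) [((i, a), True), ((j, b), True)] =
    (word_eval (StBr n) (phi_gen n) [((j, b), True), ((i, a), True)]
      :: (nat \<times> nat \<times> 'a::ring) word set \<times> nat word set)"
proof -
  have g: "(i, i + 1, a) \<in> st_gens n" "(j, j + 1, b) \<in> st_gens n" using assms by (auto simp: st_gens_def)
  have "adj_swap i j = j" "adj_swap i (j + 1) = j + 1" "adj_swap j i = i" "adj_swap j (i + 1) = i + 1"
    using assms by (auto simp: Transposition.transpose_def)
  then have "st_act n (adj_swap i) (st_gen n j (j + 1) b) = (st_gen n j (j + 1) b :: (nat \<times> nat \<times> 'a) word set)"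
    "st_act n (adj_swap j) (st_gen n i (i + 1) a) = (st_gen n i (i + 1) a :: (nat \<times> nat \<times> 'a) word set)"
    using st_act_st_gen[OF adj_swap_permutes g(2)] st_act_st_gen[OF adj_swap_permutes g(1)] assms by simp_all
  moreover have "st_gen n i (i + 1) a \<otimes>\<^bsub>St n\<^esub> st_gen n j (j + 1) b =
      (st_gen n j (j + 1) b \<otimes>\<^bsub>St n\<^esub> st_gen n i (i + 1) a :: (nat \<times> nat \<times> 'a) word set)"
    using g assms by (intro st_gen_commute) auto
  ultimately show ?thesis
    unfolding word_eval_phi_gen2[OF assms(1-4)] word_eval_phi_gen2[OF assms(3,4,1,2)]
    using br_gen_commute_far[OF assms] by simp
qed

lemma phi_gen_A2: assumes "1 \<le> i" "i + 1 \<le> n - 1"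
  shows "word_eval (StBr n) (phi_gen n) [((i, a), True), ((i + 1, b), True), ((i, c), True)] =
    (word_eval (StBr n) (phi_gen n) [((i + 1, c), True), ((i, b + a * c), True), ((i + 1, a), True)]
      :: (nat \<times> nat \<times> 'a::ring) word set \<times> nat word set)"
proof -
  have i: "1 \<le> i" "i \<le> n - 1" "1 \<le> i + 1" "i + 1 \<le> n - 1" using assms by auto
  have \<sigma>: "adj_swap i permutes {1..n}" "adj_swap (i + 1) permutes {1..n}"
    using adj_swap_permutes[OF i(1,2)] adj_swap_permutes[OF i(3,4)] .
  have \<sigma>\<sigma>: "adj_swap i \<circ> adj_swap (i + 1) permutes {1..n}" "adj_swap (i + 1) \<circ> adj_swap i permutes {1..n}"
    using \<sigma> by (auto intro: permutes_compose)
  have g: "(i, i + 1, d) \<in> st_gens n" "(i + 1, i + 2, d) \<in> st_gens n" for d :: 'a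
    using assms by (auto simp: st_gens_def)
  have "st_act n (adj_swap i) (st_gen n (i + 1) (i + 2) d) = (st_gen n i (i + 2) d :: (nat \<times> nat \<times> 'a) word set)"
    "st_act n (adj_swap i \<circ> adj_swap (i + 1)) (st_gen n i (i + 1) d) = (st_gen n (i + 1) (i + 2) d :: (nat \<times> nat \<times> 'a) word set)"
    "st_act n (adj_swap (i + 1)) (st_gen n i (i + 1) d) = (st_gen n i (i + 2) d :: (nat \<times> nat \<times> 'a) word set)"
    "st_act n (adj_swap (i + 1) \<circ> adj_swap i) (st_gen n (i + 1) (i + 2) d) = (st_gen n i (i + 1) d :: (nat \<times> nat \<times> 'a) word set)"
    for d :: 'a
    using st_act_st_gen[OF \<sigma>(1) g(2)] st_act_st_gen[OF \<sigma>\<sigma>(1) g(1)] st_act_st_gen[OF \<sigma>(2) g(1)]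
      st_act_st_gen[OF \<sigma>\<sigma>(2) g(2)]
    by (simp_all add: Transposition.transpose_def)
  moreover have "st_gen n i (i + 1) a \<otimes>\<^bsub>St n\<^esub> (st_gen n i (i + 2) b \<otimes>\<^bsub>St n\<^esub> st_gen n (i + 1) (i + 2) c) =
      (st_gen n (i + 1) (i + 2) c \<otimes>\<^bsub>St n\<^esub> (st_gen n i (i + 2) (b + a * c) \<otimes>\<^bsub>St n\<^esub> st_gen n i (i + 1) a)
        :: (nat \<times> nat \<times> 'a) word set)"
    using assms by (intro st_gen_A2) auto
  ultimately show ?thesis
    unfolding word_eval_phi_gen3[OF i(1-4) i(1,2)] word_eval_phi_gen3[OF i(3,4) i(1-4)]
    using br_gen_braid[OF assms] by (simp add: numeral_2_eq_2)
qed

lemma phi_gen_relations: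
  "\<forall>(u, v) \<in> brA_rels n.
     word_eval (StBr n) (phi_gen n) u = word_eval (StBr n) (phi_gen n) (v :: (nat \<times> 'a::ring) word)"
proof clarify
  fix u v :: "(nat \<times> 'a) word"
  assume "(u, v) \<in> brA_rels n"
  then consider
      (A1) i a b where "u = [((i, a), True), ((i, 0), True), ((i, b), True)]"
        "v = [((i, 0), True), ((i, 0), True), ((i, a + b), True)]" "1 \<le> i" "i \<le> n - 1"
    | (A1xA1) i j a b where "u = [((i, a), True), ((j, b), True)]" "v = [((j, b), True), ((i, a), True)]"
        "1 \<le> i" "i \<le> n - 1" "1 \<le> j" "j \<le> n - 1" "i + 2 \<le> j \<or> j + 2 \<le> i"
    | (A2) i a b c where "u = [((i, a), True), ((i + 1, b), True), ((i, c), True)]"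
        "v = [((i + 1, c), True), ((i, b + a * c), True), ((i + 1, a), True)]" "1 \<le> i" "i + 1 \<le> n - 1"
    unfolding brA_rels_def by blast
  then show "word_eval (StBr n) (phi_gen n) u = word_eval (StBr n) (phi_gen n) v"
  proof cases
    case A1
    show ?thesis unfolding A1(1,2) using A1(3,4) by (rule phi_gen_A1)
  next
    case A1xA1
    show ?thesis unfolding A1xA1(1,2) using A1xA1(3-7) by (rule phi_gen_A1xA1)
  next
    case A2
    show ?thesis unfolding A2(1,2) using A2(3,4) by (rule phi_gen_A2)
  qed
qed

lemma phi_eq_pres_lift: "phi n = pres_lift (StBr n) (phi_gen n)"
  by (simp add: phi_def pres_lift_def fun_eq_iff)

lemma relations_hold_phi_gen:
  "relations_hold (StBr n :: ((nat \<times> nat \<times> 'a::ring) word set \<times> nat word set) monoid) (phi_gen n)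
     (brA_gens n) (brA_rels n)"
  using phi_gen_relations unfolding relations_hold_def by blast

lemma phi_hom: "phi n \<in> hom (BrA n :: (nat \<times> 'a::ring) word set monoid) (StBr n)"
  unfolding phi_eq_pres_lift BrA_def
  by (rule pres_lift_hom[OF group_StBr phi_gen_image relations_hold_phi_gen])

lemma group_hom_phi: "group_hom (BrA n :: (nat \<times> 'a::ring) word set monoid) (StBr n) (phi n)"
  by (simp add: group_hom_def group_hom_axioms_def phi_hom group_BrA group_StBr)

lemma phi_word_class:
  "w \<in> lists (brA_gens n \<times> UNIV) \<Longrightarrow>
    phi n (word_class (brA_gens n) (brA_rels n) w) = word_eval (StBr n) (phi_gen n) (w :: (nat \<times> 'a::ring) word)"
  unfolding phi_eq_pres_lift by (rule pres_lift_word_class[OF group_StBr phi_gen_image relations_hold_phi_gen])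

section \<open>The inverse of \<open>\<phi>\<close>\<close>

abbreviation brA_gen :: "nat \<Rightarrow> nat \<Rightarrow> 'a::ring \<Rightarrow> (nat \<times> 'a) word set" where
  "brA_gen n i a \<equiv> pres_gen (brA_gens n) (brA_rels n) (i, a)"

lemma param_braid_relations_BrA: "param_braid_relations (BrA n) n (brA_gen n)"
proof -
  interpret group "BrA n :: (nat \<times> 'a) word set monoid" by (rule group_BrA)
  have gen: "brA_gen n i a \<in> carrier (BrA n)" if "1 \<le> i" "i \<le> n - 1" for i and a :: 'a
    unfolding BrA_def using that by (intro pres_gen_in_carrier) (simp add: brA_gens_def)
  have rel: "word_eval (BrA n) (pres_gen (brA_gens n) (brA_rels n)) u =
      word_eval (BrA n) (pres_gen (brA_gens n) (brA_rels n)) v"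
    if "(u, v) \<in> brA_rels n" "u \<in> lists (brA_gens n \<times> UNIV)" "v \<in> lists (brA_gens n \<times> UNIV)"
    for u v :: "(nat \<times> 'a) word"
    unfolding BrA_def using that by (rule word_eval_pres_gen_relation)
  show ?thesis
  proof (unfold_locales)
    fix i :: nat and a :: 'a assume "1 \<le> i" "i \<le> n - 1"
    then show "brA_gen n i a \<in> carrier (BrA n)" by (rule gen)
  next
    fix i :: nat and a b :: 'a assume i: "1 \<le> i" "i \<le> n - 1"
    then show "brA_gen n i a \<otimes>\<^bsub>BrA n\<^esub> brA_gen n i 0 \<otimes>\<^bsub>BrA n\<^esub> brA_gen n i b =
        brA_gen n i 0 \<otimes>\<^bsub>BrA n\<^esub> brA_gen n i 0 \<otimes>\<^bsub>BrA n\<^esub> brA_gen n i (a + b)"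
      using rel[of "[((i, a), True), ((i, 0), True), ((i, b), True)]"
          "[((i, 0), True), ((i, 0), True), ((i, a + b), True)]"] gen
      by (simp add: brA_rels_def brA_gens_def m_assoc)
  next
    fix i j :: nat and a b :: 'a
    assume ij: "1 \<le> i" "i \<le> n - 1" "1 \<le> j" "j \<le> n - 1" "i + 2 \<le> j \<or> j + 2 \<le> i"
    then show "brA_gen n i a \<otimes>\<^bsub>BrA n\<^esub> brA_gen n j b = brA_gen n j b \<otimes>\<^bsub>BrA n\<^esub> brA_gen n i a"
      using rel[of "[((i, a), True), ((j, b), True)]" "[((j, b), True), ((i, a), True)]"] gen
      by (simp add: brA_rels_def brA_gens_def)
  next
    fix i :: nat and a b c :: 'a assume i: "1 \<le> i" "i + 1 \<le> n - 1"
    then show "brA_gen n i a \<otimes>\<^bsub>BrA n\<^esub> brA_gen n (i + 1) b \<otimes>\<^bsub>BrA n\<^esub> brA_gen n i c =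
        brA_gen n (i + 1) c \<otimes>\<^bsub>BrA n\<^esub> brA_gen n i (b + a * c) \<otimes>\<^bsub>BrA n\<^esub> brA_gen n (i + 1) a"
      using rel[of "[((i, a), True), ((i + 1, b), True), ((i, c), True)]"
          "[((i + 1, c), True), ((i, b + a * c), True), ((i + 1, a), True)]"] gen
      by (simp add: brA_rels_def brA_gens_def m_assoc)
  qed
qed

interpretation BrA: param_braid_relations "BrA n" n "brA_gen n" for n
  by (rule param_braid_relations_BrA)

lemma psi_phi_gen:
  fixes a :: "'a::ring"
  assumes "1 \<le> i" "i \<le> n - 1"
  shows "BrA.psi n (phi_gen n (i, a)) = brA_gen n i a"
proof -
  have st_gen_word: "[((i, i + 1, a), True)] \<in> lists (st_gens n \<times> UNIV)"
    and br_gen_word: "[(i, True)] \<in> lists (br_gens n \<times> UNIV)"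
    using assms by (auto simp: st_gens_def br_gens_def)
  have "BrA.psi_St n (st_gen n i (i + 1) a) = BrA.X n i a"
    using assms BrA.psi_St_word_class[OF st_gen_word] by (simp add: BrA.x_root_def)
  moreover have "BrA.psi_Br n (br_gen n i) = (BrA.t n i :: (nat \<times> 'a) word set)"
    using assms BrA.psi_Br_word_class[OF br_gen_word] by (simp add: BrA.t_word_def)
  ultimately show ?thesis using assms by (simp add: phi_gen_eq BrA.psi_def BrA.y_eq_X_t)
qed

lemma psi_phi: assumes "g \<in> carrier (BrA n)"
  shows "BrA.psi n (phi n g) = g"
proof -
  obtain w where w: "w \<in> lists (brA_gens n \<times> UNIV)" "g = word_class (brA_gens n) (brA_rels n) w"
    using assms unfolding BrA_def by (rule carrier_presented_groupE)
  have "BrA.psi n (phi n g) = BrA.psi n (word_eval (StBr n) (phi_gen n) w)"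
    unfolding w(2) phi_word_class[OF w(1)] ..
  also have "\<dots> = word_eval (BrA n) (BrA.psi n \<circ> phi_gen n) w"
    by (rule hom_word_eval[OF group_StBr group_BrA BrA.psi_hom phi_gen_image w(1)])
  also have "\<dots> = word_eval (BrA n) (pres_gen (brA_gens n) (brA_rels n)) w"
  proof (rule word_eval_cong[OF _ w(1)])
    fix x :: "nat \<times> 'a" assume "x \<in> brA_gens n"
    then obtain i a where "x = (i, a)" "1 \<le> i" "i \<le> n - 1" by (auto simp: brA_gens_def)
    then show "(BrA.psi n \<circ> phi_gen n) x = pres_gen (brA_gens n) (brA_rels n) x"
      by (simp add: psi_phi_gen)
  qed
  also have "\<dots> = g" using w word_eval_pres_gen by (simp add: BrA_def)
  finally show ?thesis .
qed

lemma phi_brA_gen: assumes "1 \<le> i" "i \<le> n - 1"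
  shows "phi n (brA_gen n i a) = (phi_gen n (i, a) :: (nat \<times> nat \<times> 'a::ring) word set \<times> nat word set)"
proof -
  interpret H: group "StBr n :: ((nat \<times> nat \<times> 'a) word set \<times> nat word set) monoid" by (rule group_StBr)
  show ?thesis unfolding pres_gen_def
    using assms phi_gen_in_carrier[OF assms, of a] by (subst phi_word_class) (auto simp: brA_gens_def)
qed

lemma phi_t: assumes "1 \<le> i" "i \<le> n - 1"
  shows "phi n (BrA.t n i) = (br_incl n (br_gen n i) :: (nat \<times> nat \<times> 'a::ring) word set \<times> nat word set)"
proof -
  have "1 \<le> i" "i \<le> n" "1 \<le> i + 1" "i + 1 \<le> n" "i \<noteq> i + 1" using assms by auto
  then show ?thesis
    using assms st_gen_zero[of i n "i + 1"] by (simp add: BrA.t_def phi_brA_gen phi_gen_eq br_incl_def)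
qed

lemma phi_t_word: assumes "w \<in> lists (br_gens n \<times> UNIV)"
  shows "phi n (BrA.t_word n w) = (br_incl n (br_class n w) :: (nat \<times> nat \<times> 'a::ring) word set \<times> nat word set)"
proof -
  have "phi n (BrA.t_word n w) = word_eval (StBr n) (phi n \<circ> BrA.t n) w"
    unfolding BrA.t_word_def by (rule hom_word_eval[OF group_BrA group_StBr phi_hom BrA.t_image assms])
  also have "\<dots> = word_eval (StBr n) (br_incl n \<circ> pres_gen (br_gens n) (br_rels n)) w"
  proof (rule word_eval_cong[OF _ assms])
    fix i assume "i \<in> br_gens n"
    then have "1 \<le> i" "i \<le> n - 1" by (auto simp: br_gens_def)
    then show "(phi n \<circ> BrA.t n) i = (br_incl n \<circ> pres_gen (br_gens n) (br_rels n)) i"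
      using phi_t[of i n] by (simp add: pres_gen_def)
  qed
  also have "\<dots> = br_incl n (word_eval (Br n) (pres_gen (br_gens n) (br_rels n)) w)"
    using pres_gen_in_carrier[of _ "br_gens n" "br_rels n"] unfolding Br_def
    by (intro hom_word_eval[OF group_presented_group group_StBr br_incl_hom[unfolded Br_def] _ assms,
        symmetric]) blast
  also have "\<dots> = br_incl n (br_class n w)" using word_eval_pres_gen[OF assms] by (simp add: Br_def)
  finally show ?thesis .
qed

lemma phi_X:
  fixes a :: "'a::ring"
  assumes "1 \<le> i" "i \<le> n - 1"
  shows "phi n (BrA.X n i a) = st_incl n (st_gen n i (i + 1) a)"
proof -
  interpret H: group "StBr n :: ((nat \<times> nat \<times> 'a) word set \<times> nat word set) monoid" by (rule group_StBr)
  have ij: "1 \<le> i" "i \<le> n" "1 \<le> i + 1" "i + 1 \<le> n" "i \<noteq> i + 1" using assms by auto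
  have s: "(st_gen n i (i + 1) a :: (nat \<times> nat \<times> 'a) word set) \<in> carrier (St n)"
    and b: "br_gen n i \<in> carrier (Br n)"
    using st_gen_in_carrier[OF ij] br_gen_in_carrier[OF assms] .
  have c: "st_incl n (st_gen n i (i + 1) a) \<in> carrier (StBr n)"
    "(br_incl n (br_gen n i) :: (nat \<times> nat \<times> 'a) word set \<times> nat word set) \<in> carrier (StBr n)"
    using hom_in_carrier[OF st_incl_hom s] hom_in_carrier[OF br_incl_hom[where 'a = 'a] b] .
  have "phi n (BrA.X n i a) = phi n (brA_gen n i a) \<otimes>\<^bsub>StBr n\<^esub> inv\<^bsub>StBr n\<^esub> phi n (BrA.t n i)"
    using assms by (simp add: BrA.X_def BrA.y_closed group_hom.hom_mult[OF group_hom_phi]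
        group_hom.hom_inv[OF group_hom_phi])
  also have "\<dots> = st_incl n (st_gen n i (i + 1) a) \<otimes>\<^bsub>StBr n\<^esub> br_incl n (br_gen n i)
      \<otimes>\<^bsub>StBr n\<^esub> inv\<^bsub>StBr n\<^esub> br_incl n (br_gen n i)"
    using assms s b by (simp add: phi_brA_gen phi_t phi_gen_eq st_incl_mult_br_incl)
  also have "\<dots> = st_incl n (st_gen n i (i + 1) a)" using c by (simp add: H.m_assoc)
  finally show ?thesis .
qed

lemma phi_x_root:
  fixes a :: "'a::ring"
  assumes "1 \<le> i" "i \<le> n" "1 \<le> j" "j \<le> n" "i \<noteq> j"
  shows "phi n (BrA.x_root n a i j) = st_incl n (st_gen n i j a)"
proof -
  interpret H: group "StBr n :: ((nat \<times> nat \<times> 'a) word set \<times> nat word set) monoid" by (rule group_StBr)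
  obtain w where w: "w \<in> lists (br_gens n \<times> UNIV)"
    "\<forall>p < length [i, j]. perm_of_word w (p + 1) = [i, j] ! p"
    using braid_word_realizes[of "[i, j]" n] assms by auto
  then have p: "perm_of_word w 1 = i" "perm_of_word w 2 = j"
    using w(2)[rule_format, of 0] w(2)[rule_format, of 1] by (auto simp: numeral_2_eq_2)
  have n: "1 \<le> n - 1" "2 \<le> n" using assms by auto
  have b: "br_class n w \<in> carrier (Br n)" using w(1) unfolding Br_def by (rule word_class_in_carrier)
  have s: "(st_gen n 1 2 a :: (nat \<times> nat \<times> 'a) word set) \<in> carrier (St n)"
    using n by (intro st_gen_in_carrier) auto
  have "BrA.x_root n a i j = BrA.cj n (BrA.t_word n w) (BrA.X n 1 a)"
    using BrA.cj_t_word_x_root[OF w(1), of 1 2 a] p n by (simp add: BrA.x_root_def)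
  then have "phi n (BrA.x_root n a i j) =
      br_incl n (br_class n w) \<otimes>\<^bsub>StBr n\<^esub> st_incl n (st_gen n 1 2 a) \<otimes>\<^bsub>StBr n\<^esub> inv\<^bsub>StBr n\<^esub> br_incl n (br_class n w)"
    using n BrA.t_word_closed[OF w(1), where 'a = 'a]
    by (simp add: BrA.cj_def phi_t_word[OF w(1)] phi_X numeral_2_eq_2 group_hom.hom_mult[OF group_hom_phi]
        group_hom.hom_inv[OF group_hom_phi])
  also have "\<dots> = st_incl n (st_act n (perm_of_braid (br_class n w)) (st_gen n 1 2 a))"
    using b s hom_in_carrier[OF br_incl_hom[where 'a = 'a] b] hom_in_carrier[OF st_incl_hom st_act_closed[OF perm_of_braid_permutes[OF b] s]]
    by (simp add: br_incl_mult_st_incl)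
  also have "\<dots> = st_incl n (st_gen n i j a)"
    using n p perm_of_braid_word_class[OF w(1)] st_act_st_gen[OF perm_of_word_permutes[OF w(1)], of 1 2 a]
    by (simp add: st_gens_def)
  finally show ?thesis .
qed

lemma phi_psi: assumes "h \<in> carrier (StBr n)"
  shows "phi n (BrA.psi n h) = (h :: (nat \<times> nat \<times> 'a::ring) word set \<times> nat word set)"
proof -
  obtain s b where h: "h = (s, b)" "s \<in> carrier (St n)" "b \<in> carrier (Br n)"
    using assms by (auto simp: StBr_carrier)
  obtain u where u: "u \<in> lists (st_gens n \<times> UNIV)" "s = st_class n u" using h(2) by (rule St_carrierE)
  obtain v where v: "v \<in> lists (br_gens n \<times> UNIV)" "b = br_class n v" using h(3) by (rule Br_carrierE)
  have "phi n (BrA.psi_St n s) = phi n (word_eval (BrA n) (\<lambda>(i, j, a). BrA.x_root n a i j) u)"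
    unfolding u(2) BrA.psi_St_word_class[OF u(1)] ..
  also have "\<dots> = word_eval (StBr n) (phi n \<circ> (\<lambda>(i, j, a). BrA.x_root n a i j)) u"
    by (rule hom_word_eval[OF group_BrA group_StBr phi_hom BrA.x_root_image u(1)])
  also have "\<dots> = word_eval (StBr n) (st_incl n \<circ> pres_gen (st_gens n) (st_rels n)) u"
  proof (rule word_eval_cong[OF _ u(1)])
    fix x :: "nat \<times> nat \<times> 'a" assume "x \<in> st_gens n"
    then obtain i j a where "x = (i, j, a)" "1 \<le> i" "i \<le> n" "1 \<le> j" "j \<le> n" "i \<noteq> j"
      by (auto simp: st_gens_def)
    then show "(phi n \<circ> (\<lambda>(i, j, a). BrA.x_root n a i j)) x = (st_incl n \<circ> pres_gen (st_gens n) (st_rels n)) x"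
      using phi_x_root[of i n j a] by (simp add: pres_gen_def)
  qed
  also have "\<dots> = st_incl n (word_eval (St n) (pres_gen (st_gens n) (st_rels n)) u)"
    using pres_gen_in_carrier[of _ "st_gens n" "st_rels n"] unfolding St_def
    by (intro hom_word_eval[OF group_presented_group group_StBr st_incl_hom[unfolded St_def] _ u(1),
        symmetric]) blast
  also have "\<dots> = st_incl n s" using word_eval_pres_gen[OF u(1)] u(2) by (simp add: St_def)
  finally have "phi n (BrA.psi_St n s) = st_incl n s" .
  moreover have "phi n (BrA.psi_Br n b) = (br_incl n b :: (nat \<times> nat \<times> 'a) word set \<times> nat word set)"
    using v by (simp add: BrA.psi_Br_word_class phi_t_word)
  ultimately show ?thesis
    using h by (simp add: BrA.psi_def st_incl_mult_br_incl hom_mult[OF phi_hom]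
        hom_in_carrier[OF BrA.psi_St_hom] hom_in_carrier[OF BrA.psi_Br_hom])
qed

theorem theorem2p8:
  fixes n :: nat
  assumes "n \<ge> 2"
  shows "(\<forall>(u, v) \<in> brA_rels n.
            word_eval (StBr n) (phi_gen n) u = word_eval (StBr n) (phi_gen n) (v :: (nat \<times> 'a::ring) word))
         \<and> phi n \<in> iso (BrA n :: (nat \<times> 'a) word set monoid) (StBr n)"
proof -
  have "bij_betw (phi n) (carrier (BrA n :: (nat \<times> 'a) word set monoid)) (carrier (StBr n))"
    by (rule bij_betw_byWitness[where f' = "BrA.psi n"])
      (use psi_phi phi_psi hom_in_carrier[OF phi_hom] hom_in_carrier[OF BrA.psi_hom] in auto)
  then show ?thesis using phi_gen_relations phi_hom unfolding iso_def by blast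
qed

end
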